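(* Let $\kappa$ be an inaccessible cardinal. Then the following are equivalent: (1) $\kappa$ is weakly compact; (2) every $(\kappa,\kappa)$-connected graph has a $K_\kappa$ minor.
   Context: A graph is a pair $(V,E)$ with $E\subseteq[V]^2$. For infinite cardinals $\kappa,\lambda$, a graph is $(\kappa,\lambda)$-connected if after the removal of any set of fewer than $\kappa$ vertices, the number of connected components of the remaining graph is non-zero and less than $\lambda$. $K_\kappa$ is the complete graph on $\kappa$ vertices. A graph $H$ is a minor of $G$ if there are pairwise disjoint non-empty vertex sets $(X_u)_{u\in V_H}$ of $G$, each inducing a connected subgraph, such that for each edge $\{u,v\}$ of $H$ some vertex of $X_u$ is adjacent in $G$ to some vertex of $X_v$. *)

theory Defs
  imports Main
begin

unbundle cardinal_syntax

text \<open>Cardinals are represented as cardinal orders (well-orders) in the sense of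
  HOL's BNF cardinal library: a cardinal is a relation r with Card_order r;
  its underlying set is Field r.\<close>

definition inaccessible :: "'a rel \<Rightarrow> bool" where
  "inaccessible k \<longleftrightarrow>
     Card_order k \<and> natLeq <o k \<and> regularCard k \<and>
     (\<forall>A. A \<subseteq> Field k \<and> |A| <o k \<longrightarrow> |Pow A| <o k)"

definition weakly_compact :: "'a rel \<Rightarrow> bool" where
  "weakly_compact k \<longleftrightarrow>
     Card_order k \<and> natLeq <o k \<and>
     (\<forall>c :: 'a set \<Rightarrow> bool. \<exists>H \<subseteq> Field k. |H| =o k \<and>
        (\<exists>b. \<forall>x\<in>H. \<forall>y\<in>H. x \<noteq> y \<longrightarrow> c {x, y} = b))"

definition graph :: "'v set \<Rightarrow> 'v set set \<Rightarrow> bool" where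
  "graph V E \<longleftrightarrow> (\<forall>e\<in>E. \<exists>x y. e = {x, y} \<and> x \<noteq> y \<and> x \<in> V \<and> y \<in> V)"

definition adj_in :: "'v set set \<Rightarrow> 'v set \<Rightarrow> 'v rel" where
  "adj_in E U = {(x, y). x \<in> U \<and> y \<in> U \<and> {x, y} \<in> E}"

definition components :: "'v set set \<Rightarrow> 'v set \<Rightarrow> 'v set set" where
  "components E U = {(adj_in E U)\<^sup>* `` {x} \<inter> U | x. x \<in> U}"

definition connected_set :: "'v set set \<Rightarrow> 'v set \<Rightarrow> bool" where
  "connected_set E U \<longleftrightarrow> U \<noteq> {} \<and> (\<forall>x\<in>U. \<forall>y\<in>U. (x, y) \<in> (adj_in E U)\<^sup>*)"

definition kl_connected :: "'a rel \<Rightarrow> 'b rel \<Rightarrow> 'v set \<Rightarrow> 'v set set \<Rightarrow> bool" where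
  "kl_connected k l V E \<longleftrightarrow>
     (\<forall>S. S \<subseteq> V \<and> |S| <o k \<longrightarrow>
        components E (V - S) \<noteq> {} \<and> |components E (V - S)| <o l)"

definition has_complete_minor :: "'a rel \<Rightarrow> 'v set \<Rightarrow> 'v set set \<Rightarrow> bool" where
  "has_complete_minor k V E \<longleftrightarrow>
     (\<exists>X :: 'a \<Rightarrow> 'v set.
        (\<forall>u\<in>Field k. X u \<subseteq> V \<and> connected_set E (X u)) \<and>
        (\<forall>u\<in>Field k. \<forall>w\<in>Field k. u \<noteq> w \<longrightarrow> X u \<inter> X w = {}) \<and>
        (\<forall>u\<in>Field k. \<forall>w\<in>Field k. u \<noteq> w \<longrightarrow>
            (\<exists>x\<in>X u. \<exists>y\<in>X w. {x, y} \<in> E)))"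

end

theory Submission
  imports Defs
begin

(*
  If a colouring c of pairs has no homogeneous set of size k, the sets {gamma < beta. c {gamma, alpha}}
  for beta <= alpha, ordered by end-extension, form a k-Aronszajn tree: its levels are small by
  inaccessibility, and a branch of length k would produce a homogeneous set. The comparability graph
  of such a tree is (k,k)-connected, but it has no K_k minor, since the least elements of the branch
  sets of a minor would form a chain of size k.

  Conversely, a (k,k)-connected graph contains a (k,k)-connected subgraph with exactly k vertices;
  enumerate it as e. Colour a pair a < b by comparing, in a fixed well-order, the components of e a
  and e b in G - e[delta] at the first stage delta that separates them. For a homogeneous set H of
  size k, each G - e[alpha] has exactly one component containing k vertices of e[H]; these components
  decrease with alpha, and small connected branch sets inside them, one for each stage in a closed
  unbounded set, form a K_k minor.
*)

section \<open>Graphs\<close>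

lemma adj_in_sym: "(x, y) \<in> adj_in E U \<Longrightarrow> (y, x) \<in> adj_in E U"
  unfolding adj_in_def by (auto simp: insert_commute)

lemma rtrancl_adj_in_sym: "(x, y) \<in> (adj_in E U)\<^sup>* \<Longrightarrow> (y, x) \<in> (adj_in E U)\<^sup>*"
  by (rule symD[OF sym_rtrancl]) (rule symI, rule adj_in_sym)

lemma rtrancl_adj_in_mono: "U \<subseteq> U' \<Longrightarrow> (x, y) \<in> (adj_in E U)\<^sup>* \<Longrightarrow> (x, y) \<in> (adj_in E U')\<^sup>*"
  by (rule rtrancl_mono[THEN subsetD]) (auto simp: adj_in_def)

lemma Image_rtrancl_adj_in_eq:
  assumes "(x, y) \<in> (adj_in E U)\<^sup>*"
  shows "(adj_in E U)\<^sup>* `` {x} = (adj_in E U)\<^sup>* `` {y}"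
  using rtrancl_trans[OF assms] rtrancl_trans[OF rtrancl_adj_in_sym[OF assms]] by blast

lemma connected_set_iff_root:
  assumes "x \<in> U"
  shows "connected_set E U \<longleftrightarrow> (\<forall>v\<in>U. (x, v) \<in> (adj_in E U)\<^sup>*)"
proof
  assume "connected_set E U"
  thus "\<forall>v\<in>U. (x, v) \<in> (adj_in E U)\<^sup>*" using assms unfolding connected_set_def by blast
next
  assume root: "\<forall>v\<in>U. (x, v) \<in> (adj_in E U)\<^sup>*"
  show "connected_set E U" unfolding connected_set_def
  proof (intro conjI ballI)
    show "U \<noteq> {}" using assms by blast
    fix v w assume "v \<in> U" "w \<in> U"
    hence "(v, x) \<in> (adj_in E U)\<^sup>*" "(x, w) \<in> (adj_in E U)\<^sup>*"
      using root by (blast intro: rtrancl_adj_in_sym)+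
    thus "(v, w) \<in> (adj_in E U)\<^sup>*" by (rule rtrancl_trans)
  qed
qed

lemma connected_set_insert_neighbour:
  assumes "connected_set E P" "y \<in> P" "{y, z} \<in> E"
  shows "connected_set E (insert z P)"
proof -
  have "(y, v) \<in> (adj_in E (insert z P))\<^sup>*" if "v \<in> insert z P" for v
  proof (cases "v = z")
    case True
    have "(y, z) \<in> adj_in E (insert z P)" using assms(2,3) unfolding adj_in_def by blast
    thus ?thesis using True by (simp add: r_into_rtrancl)
  next
    case False
    hence "(y, v) \<in> (adj_in E P)\<^sup>*" using that assms(1,2) unfolding connected_set_def by blast
    thus ?thesis by (rule rtrancl_adj_in_mono[rotated]) blast
  qed
  moreover have "y \<in> insert z P" using assms(2) by blast
  ultimately show ?thesis using connected_set_iff_root by metis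
qed

lemma connected_set_insert_UN:
  assumes "\<And>i. i \<in> I \<Longrightarrow> connected_set E (A i) \<and> x \<in> A i"
  shows "connected_set E (insert x (\<Union>i\<in>I. A i))"
proof -
  have "(x, v) \<in> (adj_in E (insert x (\<Union>i\<in>I. A i)))\<^sup>*" if v: "v \<in> insert x (\<Union>i\<in>I. A i)" for v
  proof (cases "v = x")
    case False
    then obtain i where i: "i \<in> I" "v \<in> A i" using v by blast
    hence "(x, v) \<in> (adj_in E (A i))\<^sup>*"
      using assms[OF i(1)] connected_set_iff_root[of x "A i" E] by blast
    thus ?thesis by (rule rtrancl_adj_in_mono[rotated]) (use i in blast)
  qed simp
  thus ?thesis using connected_set_iff_root[of x "insert x (\<Union>i\<in>I. A i)" E] by blast
qed

lemma rtrancl_adj_in_finite_connected: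
  assumes "(x, y) \<in> (adj_in E U)\<^sup>*" "x \<in> U"
  shows "\<exists>P. finite P \<and> P \<subseteq> U \<and> x \<in> P \<and> y \<in> P \<and> connected_set E P"
  using assms(1)
proof (induction rule: rtrancl_induct)
  case base
  show ?case using assms(2) by (intro exI[of _ "{x}"]) (simp add: connected_set_def)
next
  case (step y z)
  then obtain P where P: "finite P" "P \<subseteq> U" "x \<in> P" "y \<in> P" "connected_set E P" by blast
  have "z \<in> U" "{y, z} \<in> E" using step(2) unfolding adj_in_def by blast+
  moreover have "connected_set E (insert z P)"
    using connected_set_insert_neighbour[OF P(5,4)] calculation(2) .
  ultimately show ?case using P by (intro exI[of _ "insert z P"]) simp
qed

lemma components_subset_restrict:
  assumes "U' \<subseteq> U"
    and reflect: "\<And>x y. x \<in> U' \<Longrightarrow> y \<in> U' \<Longrightarrow> (x, y) \<in> (adj_in E U)\<^sup>* \<Longrightarrow> (x, y) \<in> (adj_in E U')\<^sup>*"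
  shows "components E U' \<subseteq> (\<lambda>D. D \<inter> U') ` components E U"
proof
  fix D assume "D \<in> components E U'"
  then obtain x where x: "x \<in> U'" "D = (adj_in E U')\<^sup>* `` {x} \<inter> U'"
    unfolding components_def by blast
  have "D = ((adj_in E U)\<^sup>* `` {x} \<inter> U) \<inter> U'"
  proof
    show "D \<subseteq> ((adj_in E U)\<^sup>* `` {x} \<inter> U) \<inter> U'"
      using x assms(1) by (auto intro: rtrancl_adj_in_mono[OF assms(1)])
    show "((adj_in E U)\<^sup>* `` {x} \<inter> U) \<inter> U' \<subseteq> D"
      using x by (auto intro: reflect)
  qed
  moreover have "(adj_in E U)\<^sup>* `` {x} \<inter> U \<in> components E U"
    unfolding components_def using x assms(1) by blast
  ultimately show "D \<in> (\<lambda>D. D \<inter> U') ` components E U" by blast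
qed

lemma has_complete_minor_mono:
  assumes "V' \<subseteq> V" "has_complete_minor k V' E"
  shows "has_complete_minor k V E"
proof -
  obtain X where X1: "\<forall>u\<in>Field k. X u \<subseteq> V' \<and> connected_set E (X u)"
    and X2: "\<forall>u\<in>Field k. \<forall>w\<in>Field k. u \<noteq> w \<longrightarrow> X u \<inter> X w = {}"
    and X3: "\<forall>u\<in>Field k. \<forall>w\<in>Field k. u \<noteq> w \<longrightarrow> (\<exists>x\<in>X u. \<exists>y\<in>X w. {x, y} \<in> E)"
    using assms(2) unfolding has_complete_minor_def by blast
  have "\<forall>u\<in>Field k. X u \<subseteq> V \<and> connected_set E (X u)" using X1 assms(1) by blast
  thus ?thesis unfolding has_complete_minor_def using X2 X3 by blast
qed

section \<open>Inaccessible cardinals\<close>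

locale inaccessible_card =
  fixes k :: "'a rel"
  assumes inaccessible: "inaccessible k"
begin

lemma Card_order: "Card_order k"
  using inaccessible unfolding inaccessible_def by blast

lemma Well_order: "Well_order k"
  using Card_order card_order_on_well_order_on by blast

lemma natLeq_ordLess: "natLeq <o k"
  using inaccessible unfolding inaccessible_def by blast

lemma Field_ordIso: "|Field k| =o k"
  using Card_order card_of_Field_ordIso by blast

lemma infinite_Field: "infinite (Field k)"
proof
  assume "finite (Field k)"
  hence "k <o natLeq"
    by (metis Field_ordIso finite_iff_ordLess_natLeq ordIso_ordLess_trans ordIso_symmetric)
  thus False using natLeq_ordLess ordLess_irreflexive ordLess_transitive by blast
qed

lemma stable: "stable k"
  using inaccessible regularCard_stable Card_order infinite_Field
  unfolding inaccessible_def by blast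

abbreviation preceq :: "'a \<Rightarrow> 'a \<Rightarrow> bool" (infix "\<preceq>" 50) where
  "a \<preceq> b \<equiv> (a, b) \<in> k"

definition prec :: "'a \<Rightarrow> 'a \<Rightarrow> bool" (infix "\<prec>" 50) where
  "a \<prec> b \<longleftrightarrow> a \<preceq> b \<and> a \<noteq> b"

lemma preceq_Field: "a \<preceq> b \<Longrightarrow> a \<in> Field k \<and> b \<in> Field k"
  unfolding Field_def by blast

lemma prec_Field: "a \<prec> b \<Longrightarrow> a \<in> Field k \<and> b \<in> Field k"
  unfolding prec_def using preceq_Field by blast

lemma preceq_refl: "a \<in> Field k \<Longrightarrow> a \<preceq> a"
  using Well_order unfolding order_on_defs refl_on_def by blast

lemma preceq_trans: "a \<preceq> b \<Longrightarrow> b \<preceq> c \<Longrightarrow> a \<preceq> c"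
  using Well_order unfolding order_on_defs trans_def by blast

lemma preceq_antisym: "a \<preceq> b \<Longrightarrow> b \<preceq> a \<Longrightarrow> a = b"
  using Well_order unfolding order_on_defs antisym_def by blast

lemma prec_trichotomy: "a \<in> Field k \<Longrightarrow> b \<in> Field k \<Longrightarrow> a \<prec> b \<or> a = b \<or> b \<prec> a"
  using Well_order unfolding order_on_defs total_on_def prec_def by blast

lemma not_prec: "a \<in> Field k \<Longrightarrow> b \<in> Field k \<Longrightarrow> \<not> a \<prec> b \<Longrightarrow> b \<preceq> a"
  using prec_trichotomy preceq_refl unfolding prec_def by blast

lemma prec_imp_preceq: "a \<prec> b \<Longrightarrow> a \<preceq> b"
  unfolding prec_def by blast

lemma prec_irrefl: "\<not> a \<prec> a"
  unfolding prec_def by blast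

lemma prec_trans: "a \<prec> b \<Longrightarrow> b \<prec> c \<Longrightarrow> a \<prec> c"
  unfolding prec_def using preceq_trans preceq_antisym by blast

lemma prec_preceq_trans: "a \<prec> b \<Longrightarrow> b \<preceq> c \<Longrightarrow> a \<prec> c"
  unfolding prec_def using preceq_trans preceq_antisym by blast

lemma preceq_prec_trans: "a \<preceq> b \<Longrightarrow> b \<prec> c \<Longrightarrow> a \<prec> c"
  unfolding prec_def using preceq_trans preceq_antisym by blast

lemma prec_asym: "a \<prec> b \<Longrightarrow> \<not> b \<prec> a"
  using prec_trans prec_irrefl by blast

lemma wf_prec: "wf {(a, b). a \<prec> b}"
proof -
  have "{(a, b). a \<prec> b} = k - Id" unfolding prec_def by auto
  thus ?thesis using Well_order unfolding order_on_defs by simp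
qed

lemma prec_minimal:
  assumes "x \<in> A"
  obtains m where "m \<in> A" "\<And>y. y \<prec> m \<Longrightarrow> y \<notin> A"
  using wfE_min[OF wf_prec assms] by auto

definition small :: "'b set \<Rightarrow> bool" where
  "small A \<longleftrightarrow> |A| <o k"

lemma small_subset: "small A \<Longrightarrow> B \<subseteq> A \<Longrightarrow> small B"
  unfolding small_def by (metis card_of_mono1 ordLeq_ordLess_trans)

lemma small_image: "small A \<Longrightarrow> small (f ` A)"
  unfolding small_def by (metis card_of_image ordLeq_ordLess_trans)

lemma small_inj_on_imageD: "inj_on f A \<Longrightarrow> small (f ` A) \<Longrightarrow> small A"
  using small_image[of "f ` A" "inv_into A f"] by simp

lemma small_finite: "finite A \<Longrightarrow> small A"
  unfolding small_def
  by (metis finite_iff_ordLess_natLeq natLeq_ordLess ordLess_transitive)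

lemma small_Un: "small A \<Longrightarrow> small B \<Longrightarrow> small (A \<union> B)"
  unfolding small_def using card_of_Un_ordLess_infinite_Field[OF infinite_Field Card_order] by blast

lemma small_insert: "small A \<Longrightarrow> small (insert x A)"
  using small_Un[of "{x}" A] small_finite[of "{x}"] by simp

lemma small_UN: "small I \<Longrightarrow> (\<And>i. i \<in> I \<Longrightarrow> small (F i)) \<Longrightarrow> small (\<Union>i\<in>I. F i)"
  unfolding small_def by (rule stable_UNION[OF stable])

lemma small_Times: "small A \<Longrightarrow> small B \<Longrightarrow> small (A \<times> B)"
  unfolding small_def by (rule stable_elim[OF stable])

lemma small_range_nat: "small (range (f :: nat \<Rightarrow> 'b))"
proof -
  have "|range f| \<le>o natLeq"
    using card_of_image card_of_nat ordLeq_ordIso_trans by blast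
  thus ?thesis unfolding small_def using natLeq_ordLess ordLeq_ordLess_trans by blast
qed

lemma not_small_Field: "\<not> small (Field k)"
  unfolding small_def by (metis Field_ordIso not_ordLess_ordIso)

lemma ordIso_not_small: "|A| =o k \<Longrightarrow> \<not> small A"
  unfolding small_def by (metis not_ordLess_ordIso)

lemma not_small_ordIso:
  assumes "A \<subseteq> Field k" "\<not> small A"
  shows "|A| =o k"
proof -
  have "|A| \<le>o k" by (metis card_of_mono1[OF assms(1)] Field_ordIso ordLeq_ordIso_trans)
  thus ?thesis using assms(2) unfolding small_def by (metis ordLeq_iff_ordLess_or_ordIso)
qed

lemma small_ordLeq_Field: "small A \<Longrightarrow> |A| \<le>o |Field k|"
  unfolding small_def
  by (metis Field_ordIso ordIso_symmetric ordLess_imp_ordLeq ordLess_ordIso_trans)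

lemma not_small_embedding:
  assumes "\<not> small A"
  obtains f where "inj_on f (Field k)" "f ` Field k \<subseteq> A"
proof -
  have "k \<le>o |A|"
    using assms not_ordLeq_iff_ordLess[OF card_of_Well_order Well_order] unfolding small_def by blast
  hence "|Field k| \<le>o |A|" by (metis Field_ordIso ordIso_ordLeq_trans)
  thus ?thesis using that by (metis card_of_ordLeq)
qed

lemma small_Pow:
  assumes "small A"
  shows "small (Pow A)"
proof -
  obtain f where f: "inj_on f A" "f ` A \<subseteq> Field k"
    using small_ordLeq_Field[OF assms] by (metis card_of_ordLeq)
  have "|Pow (f ` A)| <o k"
    using inaccessible f(2) small_image[OF assms] unfolding inaccessible_def small_def by blast
  moreover have "|Pow A| =o |Pow (f ` A)|"
    using bij_betw_Pow[OF inj_on_imp_bij_betw[OF f(1)]] by (metis card_of_ordIso)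
  ultimately show ?thesis unfolding small_def by (metis ordIso_ordLess_trans)
qed

lemma UN_small_ordLeq:
  assumes "\<And>\<alpha>. \<alpha> \<in> Field k \<Longrightarrow> small (A \<alpha>)"
  shows "|\<Union>\<alpha>\<in>Field k. A \<alpha>| \<le>o k"
proof -
  have "|\<Union>\<alpha>\<in>Field k. A \<alpha>| \<le>o |SIGMA \<alpha> : Field k. A \<alpha>|" by (rule card_of_UNION_Sigma)
  moreover have "|SIGMA \<alpha> : Field k. A \<alpha>| \<le>o |Field k \<times> Field k|"
    using assms small_ordLeq_Field by (intro card_of_Sigma_mono1) blast
  ultimately have "|\<Union>\<alpha>\<in>Field k. A \<alpha>| \<le>o |Field k \<times> Field k|" by (rule ordLeq_transitive)
  thus ?thesis
    using card_of_Times_same_infinite[OF infinite_Field] Field_ordIso ordLeq_ordIso_trans by metis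
qed

lemma small_initial_segment:
  assumes "a \<in> Field k"
  shows "small {b. b \<prec> a}"
proof -
  have "{b. b \<prec> a} = underS k a" unfolding underS_def prec_def by auto
  thus ?thesis using card_of_underS[OF Card_order assms] unfolding small_def by simp
qed

lemma small_closed_initial_segment:
  assumes "a \<in> Field k"
  shows "small {b. b \<preceq> a}"
proof -
  have "{b. b \<preceq> a} \<subseteq> insert a {b. b \<prec> a}" unfolding prec_def by blast
  thus ?thesis by (rule small_subset[OF small_insert[OF small_initial_segment[OF assms]]])
qed

lemma prec_unbounded:
  assumes "a \<in> Field k"
  obtains b where "a \<prec> b"
proof -
  have "\<not> Field k \<subseteq> {b. b \<preceq> a}"
  proof
    assume "Field k \<subseteq> {b. b \<preceq> a}"
    hence "small (Field k)" by (rule small_subset[OF small_closed_initial_segment[OF assms]])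
    thus False using not_small_Field by blast
  qed
  thus ?thesis using that not_prec[OF assms] by blast
qed

lemma small_bounded:
  assumes "A \<subseteq> Field k" "small A"
  obtains g where "g \<in> Field k" "\<And>a. a \<in> A \<Longrightarrow> a \<prec> g"
proof -
  have "cofinal A k \<Longrightarrow> |A| =o k"
    using inaccessible assms(1) unfolding inaccessible_def regularCard_def by blast
  hence "\<not> cofinal A k" using ordIso_not_small assms(2) by blast
  then obtain a where a: "a \<in> Field k" "\<forall>b\<in>A. a = b \<or> \<not> a \<preceq> b"
    unfolding cofinal_def by auto
  have below: "b \<preceq> a" if b: "b \<in> A" for b
  proof (cases "a = b")
    case True
    thus ?thesis using preceq_refl a(1) by simp
  next
    case False
    hence "\<not> a \<prec> b" using a(2) b prec_imp_preceq by blast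
    thus ?thesis using not_prec a(1) b assms(1) by blast
  qed
  obtain g where g: "a \<prec> g" using prec_unbounded[OF a(1)] .
  show ?thesis
  proof (rule that)
    show "g \<in> Field k" using prec_Field[OF g] by blast
    show "b \<prec> g" if "b \<in> A" for b using preceq_prec_trans[OF below[OF that] g] .
  qed
qed

lemma not_small_unbounded:
  assumes "A \<subseteq> Field k" "\<not> small A" "a \<in> Field k"
  obtains b where "b \<in> A" "a \<prec> b"
proof -
  have "\<not> A \<subseteq> {b. b \<preceq> a}"
  proof
    assume "A \<subseteq> {b. b \<preceq> a}"
    hence "small A" by (rule small_subset[OF small_closed_initial_segment[OF assms(3)]])
    thus False using assms(2) by blast
  qed
  then obtain b where "b \<in> A" "\<not> b \<preceq> a" by blast
  thus ?thesis using that not_prec assms(1,3) by blast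
qed

lemma unbounded_not_small:
  assumes "A \<subseteq> Field k" "\<And>a. a \<in> Field k \<Longrightarrow> \<exists>b\<in>A. a \<prec> b"
  shows "\<not> small A"
proof
  assume "small A"
  then obtain g where g: "g \<in> Field k" "\<And>a. a \<in> A \<Longrightarrow> a \<prec> g"
    using small_bounded[OF assms(1)] by blast
  then obtain b where "b \<in> A" "g \<prec> b" using assms(2) by blast
  thus False using g(2) prec_asym by blast
qed

text \<open>The closure point is the supremum of an \<open>\<omega>\<close>-chain of bounds, which stays below
  \<open>k\<close> by regularity.\<close>

lemma closure_point:
  assumes h: "\<And>x. x \<in> Field k \<Longrightarrow> h x \<in> Field k" and a0: "a0 \<in> Field k"
  obtains g where "g \<in> Field k" "a0 \<prec> g" "\<And>x. x \<prec> g \<Longrightarrow> h x \<prec> g"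
proof -
  define bd where "bd A = (SOME g. g \<in> Field k \<and> (\<forall>a\<in>A. a \<prec> g))" for A
  have bd: "bd A \<in> Field k \<and> (\<forall>a\<in>A. a \<prec> bd A)" if A: "A \<subseteq> Field k" "small A" for A
  proof -
    obtain g where "g \<in> Field k" "\<And>a. a \<in> A \<Longrightarrow> a \<prec> g" using small_bounded[OF A] by blast
    hence "\<exists>g. g \<in> Field k \<and> (\<forall>a\<in>A. a \<prec> g)" by blast
    thus ?thesis unfolding bd_def by (rule someI_ex)
  qed
  define up where "up b = bd (insert b (h ` {x. x \<preceq> b}))" for b
  have up: "up b \<in> Field k \<and> b \<prec> up b \<and> (\<forall>x. x \<preceq> b \<longrightarrow> h x \<prec> up b)"
    if b: "b \<in> Field k" for b
  proof -
    have "insert b (h ` {x. x \<preceq> b}) \<subseteq> Field k" using b h preceq_Field by blast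
    moreover have "small (insert b (h ` {x. x \<preceq> b}))"
      by (rule small_insert[OF small_image[OF small_closed_initial_segment[OF b]]])
    ultimately show ?thesis using bd unfolding up_def by blast
  qed
  define B where "B n = (up ^^ n) a0" for n
  have B_Field: "B n \<in> Field k" for n
    by (induction n) (simp_all add: B_def a0 up)
  have B: "B n \<prec> B (Suc n) \<and> (\<forall>x. x \<preceq> B n \<longrightarrow> h x \<prec> B (Suc n))" for n
    using up[OF B_Field[of n]] by (simp add: B_def)
  have "range B \<subseteq> Field k" using B_Field by auto
  then obtain g0 where g0: "g0 \<in> Field k" "\<And>n. B n \<prec> g0"
    using small_bounded[OF _ small_range_nat] by (metis rangeI)
  define G where "G = {g \<in> Field k. \<forall>n. B n \<prec> g}"
  have "g0 \<in> G" using g0 unfolding G_def by blast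
  then obtain g where g: "g \<in> G" and gmin: "\<And>y. y \<prec> g \<Longrightarrow> y \<notin> G"
    by (rule prec_minimal) blast
  have g_bound: "B n \<prec> g" for n using g unfolding G_def by blast
  have "h x \<prec> g" if x: "x \<prec> g" for x
  proof -
    obtain n where "\<not> B n \<prec> x" using gmin[OF x] prec_Field[OF x] unfolding G_def by blast
    hence "x \<preceq> B n" using not_prec[of "B n" x] B_Field prec_Field[OF x] by blast
    hence "h x \<prec> B (Suc n)" using B by blast
    thus ?thesis using g_bound by (rule prec_trans)
  qed
  moreover have "a0 \<prec> g" using g_bound[of 0] by (simp add: B_def)
  moreover have "g \<in> Field k" using g unfolding G_def by blast
  ultimately show ?thesis using that by blast
qed

lemma closure_points_not_small:
  assumes "\<And>x. x \<in> Field k \<Longrightarrow> h x \<in> Field k"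
  shows "\<not> small {g \<in> Field k. \<forall>x. x \<prec> g \<longrightarrow> h x \<prec> g}"
proof (rule unbounded_not_small)
  fix a assume "a \<in> Field k"
  then obtain g where "g \<in> Field k" "a \<prec> g" "\<And>x. x \<prec> g \<Longrightarrow> h x \<prec> g"
    using closure_point[of h, OF assms] by blast
  thus "\<exists>b\<in>{g \<in> Field k. \<forall>x. x \<prec> g \<longrightarrow> h x \<prec> g}. a \<prec> b" by blast
qed blast

end

section \<open>Trees\<close>

definition tree_order :: "'b rel \<Rightarrow> bool" where
  "tree_order R \<longleftrightarrow> trans R \<and> wf R \<and>
     (\<forall>x y z. (x, z) \<in> R \<longrightarrow> (y, z) \<in> R \<longrightarrow> x = y \<or> (x, y) \<in> R \<or> (y, x) \<in> R)"

definition tree_edges :: "'b rel \<Rightarrow> 'b set set" where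
  "tree_edges R = {{x, y} | x y. (x, y) \<in> R}"

lemma tree_order_comparable_below:
  assumes "tree_order R" "(a, z) \<in> R\<^sup>=" "(b, z) \<in> R\<^sup>="
  shows "(a, b) \<in> R\<^sup>= \<or> (b, a) \<in> R\<^sup>="
proof -
  have "a = b \<or> (a, b) \<in> R \<or> (b, a) \<in> R" if "(a, z) \<in> R" "(b, z) \<in> R"
    using assms(1) that unfolding tree_order_def by blast
  thus ?thesis using assms(2,3) by auto
qed

lemma graph_tree_edges:
  assumes "R \<subseteq> T \<times> T" "wf R"
  shows "graph T (tree_edges R)"
proof -
  have "x \<noteq> y" if "(x, y) \<in> R" for x y using that wf_not_refl[OF assms(2)] by blast
  thus ?thesis using assms(1) unfolding graph_def tree_edges_def by blast
qed

lemma doubleton_in_tree_edges: "{x, y} \<in> tree_edges R \<longleftrightarrow> (x, y) \<in> R \<or> (y, x) \<in> R"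
proof
  assume "{x, y} \<in> tree_edges R"
  then obtain a b where "{x, y} = {a, b}" "(a, b) \<in> R" unfolding tree_edges_def by blast
  thus "(x, y) \<in> R \<or> (y, x) \<in> R" unfolding doubleton_eq_iff by blast
next
  have "{x, y} = {y, x}" by (rule insert_commute)
  moreover assume "(x, y) \<in> R \<or> (y, x) \<in> R"
  ultimately show "{x, y} \<in> tree_edges R" unfolding tree_edges_def by blast
qed

lemma adj_in_tree_edges:
  "(x, y) \<in> adj_in (tree_edges R) U \<longleftrightarrow> x \<in> U \<and> y \<in> U \<and> ((x, y) \<in> R \<or> (y, x) \<in> R)"
  unfolding adj_in_def by (simp add: doubleton_in_tree_edges)

text \<open>The least element of a component of a forest minus \<open>S\<close> has all its predecessors in \<open>S\<close>.\<close>

lemma components_tree_edges_roots: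
  assumes "R \<subseteq> T \<times> T" "wf R"
  shows "components (tree_edges R) (T - S) \<subseteq>
    (\<lambda>r. (adj_in (tree_edges R) (T - S))\<^sup>* `` {r} \<inter> (T - S)) ` {r \<in> T - S. \<forall>x. (x, r) \<in> R \<longrightarrow> x \<in> S}"
proof
  let ?A = "adj_in (tree_edges R) (T - S)"
  fix D assume "D \<in> components (tree_edges R) (T - S)"
  then obtain x where x: "x \<in> T - S" "D = ?A\<^sup>* `` {x} \<inter> (T - S)"
    unfolding components_def by blast
  have "x \<in> D" using x by blast
  then obtain r where r: "r \<in> D" "\<And>y. (y, r) \<in> R \<Longrightarrow> y \<notin> D"
    using wfE_min[OF assms(2)] by metis
  have rD: "r \<in> T - S" "(x, r) \<in> ?A\<^sup>*" using r(1) x(2) by blast+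
  have "p \<in> S" if p: "(p, r) \<in> R" for p
  proof (rule ccontr)
    assume "p \<notin> S"
    hence pTS: "p \<in> T - S" using p assms(1) by blast
    hence "(r, p) \<in> ?A" using p rD(1) by (simp add: adj_in_tree_edges)
    hence "(x, p) \<in> ?A\<^sup>*" by (rule rtrancl_into_rtrancl[OF rD(2)])
    hence "p \<in> D" using x(2) pTS by blast
    thus False using r(2) p by blast
  qed
  moreover have "D = ?A\<^sup>* `` {r} \<inter> (T - S)"
    using Image_rtrancl_adj_in_eq[OF rD(2)] x(2) by simp
  ultimately show "D \<in> (\<lambda>r. ?A\<^sup>* `` {r} \<inter> (T - S)) ` {r \<in> T - S. \<forall>x. (x, r) \<in> R \<longrightarrow> x \<in> S}"
    using r(1) x(2) by blast
qed

lemma tree_order_trans_reflcl: "tree_order R \<Longrightarrow> (a, b) \<in> R\<^sup>= \<Longrightarrow> (b, c) \<in> R\<^sup>= \<Longrightarrow> (a, c) \<in> R\<^sup>="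
  unfolding tree_order_def by (metis trans_on_reflcl transD)

lemma tree_order_comparable_if_edge:
  assumes R: "tree_order R" and "(x, p) \<in> R\<^sup>=" "(y, q) \<in> R\<^sup>=" "(p, q) \<in> R \<or> (q, p) \<in> R"
  shows "(x, y) \<in> R\<^sup>= \<or> (y, x) \<in> R\<^sup>="
proof (cases "(p, q) \<in> R")
  case True
  hence "(x, q) \<in> R\<^sup>=" using tree_order_trans_reflcl[OF R assms(2)] by blast
  thus ?thesis using tree_order_comparable_below[OF R _ assms(3)] by blast
next
  case False
  hence "(y, p) \<in> R\<^sup>=" using assms(4) tree_order_trans_reflcl[OF R assms(3)] by blast
  thus ?thesis using tree_order_comparable_below[OF R assms(2)] by blast
qed

lemma tree_edges_walk_common_lower:
  assumes R: "tree_order R" and "(x, y) \<in> (adj_in (tree_edges R) X)\<^sup>*" "x \<in> X"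
  shows "\<exists>m\<in>X. (m, x) \<in> R\<^sup>= \<and> (m, y) \<in> R\<^sup>="
  using assms(2)
proof (induction rule: rtrancl_induct)
  case base
  thus ?case using assms(3) by blast
next
  case (step y z)
  then obtain m where m: "m \<in> X" "(m, x) \<in> R\<^sup>=" "(m, y) \<in> R\<^sup>=" by blast
  have z: "z \<in> X" and yz: "(y, z) \<in> R \<or> (z, y) \<in> R"
    using step(2) unfolding adj_in_tree_edges by blast+
  have "(m, z) \<in> R\<^sup>= \<or> (z, m) \<in> R\<^sup>="
    using tree_order_comparable_if_edge[OF R m(3) _ yz] by blast
  moreover have "(z, x) \<in> R\<^sup>=" if "(z, m) \<in> R\<^sup>=" using tree_order_trans_reflcl[OF R that m(2)] .
  ultimately show ?case using m z by blast
qed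

lemma connected_set_tree_edges_root:
  assumes R: "tree_order R" and X: "connected_set (tree_edges R) X"
  obtains r where "r \<in> X" "\<And>y. y \<in> X \<Longrightarrow> (r, y) \<in> R\<^sup>="
proof -
  have wfR: "wf R" using R unfolding tree_order_def by blast
  obtain x where x: "x \<in> X" using X unfolding connected_set_def by blast
  define M where "M = {m \<in> X. (m, x) \<in> R\<^sup>=}"
  have "x \<in> M" using x M_def by blast
  then obtain r where r: "r \<in> M" "\<And>y. (y, r) \<in> R \<Longrightarrow> y \<notin> M"
    using wfE_min[OF wfR] by metis
  have "(r, y) \<in> R\<^sup>=" if y: "y \<in> X" for y
  proof -
    have "(x, y) \<in> (adj_in (tree_edges R) X)\<^sup>*" using X x y unfolding connected_set_def by blast
    then obtain m where m: "m \<in> X" "(m, x) \<in> R\<^sup>=" "(m, y) \<in> R\<^sup>="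
      using tree_edges_walk_common_lower[OF R _ x] by blast
    have "(r, x) \<in> R\<^sup>=" using r(1) M_def by blast
    hence "(r, m) \<in> R\<^sup>= \<or> (m, r) \<in> R\<^sup>=" using tree_order_comparable_below[OF R _ m(2)] by blast
    moreover have "(m, r) \<notin> R" using r(2) m(1,2) M_def by blast
    ultimately have "(r, m) \<in> R\<^sup>=" by blast
    thus ?thesis using tree_order_trans_reflcl[OF R _ m(3)] by blast
  qed
  thus ?thesis using that r(1) M_def by blast
qed

lemma map_prod_image_mem_iff:
  assumes "inj_on j T" "R \<subseteq> T \<times> T" "a \<in> T" "b \<in> T"
  shows "(j a, j b) \<in> map_prod j j ` R \<longleftrightarrow> (a, b) \<in> R"
proof
  assume "(j a, j b) \<in> map_prod j j ` R"
  then obtain a' b' where ab': "(a', b') \<in> R" "j a = j a'" "j b = j b'" by auto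
  have "a' \<in> T" "b' \<in> T" using ab'(1) assms(2) by blast+
  hence "a = a'" "b = b'" using inj_onD[OF assms(1)] ab'(2,3) assms(3,4) by blast+
  thus "(a, b) \<in> R" using ab'(1) by simp
qed (rule map_prod_imageI)

lemma roots_map_prod_image_subset:
  assumes RT: "R \<subseteq> T \<times> T"
  shows "{r \<in> j ` T - S. \<forall>x. (x, r) \<in> map_prod j j ` R \<longrightarrow> x \<in> S}
    \<subseteq> j ` {r \<in> T - {t \<in> T. j t \<in> S}. \<forall>x. (x, r) \<in> R \<longrightarrow> x \<in> {t \<in> T. j t \<in> S}}"
proof
  fix r' assume r': "r' \<in> {r \<in> j ` T - S. \<forall>x. (x, r) \<in> map_prod j j ` R \<longrightarrow> x \<in> S}"
  then obtain r where r: "r \<in> T" "r' = j r" by blast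
  have "x \<in> {t \<in> T. j t \<in> S}" if xr: "(x, r) \<in> R" for x
  proof -
    have "(j x, r') \<in> map_prod j j ` R" using map_prod_imageI[OF xr] r(2) by simp
    hence "j x \<in> S" using r' by simp
    moreover have "x \<in> T" using xr RT by blast
    ultimately show ?thesis by simp
  qed
  moreover have "r \<notin> {t \<in> T. j t \<in> S}" using r r' by blast
  ultimately show "r' \<in> j ` {r \<in> T - {t \<in> T. j t \<in> S}. \<forall>x. (x, r) \<in> R \<longrightarrow> x \<in> {t \<in> T. j t \<in> S}}"
    using r by blast
qed

lemma tree_order_map_prod_image:
  assumes j: "inj_on j T" and RT: "R \<subseteq> T \<times> T" and R: "tree_order R"
  shows "tree_order (map_prod j j ` R)"
  unfolding tree_order_def
proof (intro conjI allI impI)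
  let ?R = "map_prod j j ` R"
  note mem = map_prod_image_mem_iff[OF j RT]
  have R_cases: "\<exists>a b. a \<in> T \<and> b \<in> T \<and> x = j a \<and> y = j b" if xy: "(x, y) \<in> ?R" for x y
    using xy RT by blast
  have transR: "(a, b) \<in> R \<Longrightarrow> (b, c) \<in> R \<Longrightarrow> (a, c) \<in> R" for a b c
    using R unfolding tree_order_def trans_def by blast
  show "trans ?R"
  proof (rule transI)
    fix x y z assume xy: "(x, y) \<in> ?R" and yz: "(y, z) \<in> ?R"
    obtain a b where ab: "a \<in> T" "b \<in> T" "x = j a" "y = j b" using R_cases[OF xy] by blast
    obtain c where c: "c \<in> T" "z = j c" using R_cases[OF yz] by blast
    have "(a, b) \<in> R" "(b, c) \<in> R" using xy yz ab c mem by simp_all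
    hence "(a, c) \<in> R" by (rule transR)
    thus "(x, z) \<in> ?R" using ab c by blast
  qed
  show "wf ?R"
    using R inj_onD[OF j] RT unfolding tree_order_def by (intro wf_map_prod_image_Dom_Ran) blast+
  fix x y z assume xz: "(x, z) \<in> ?R" and yz: "(y, z) \<in> ?R"
  obtain a c where ac: "a \<in> T" "c \<in> T" "x = j a" "z = j c" using R_cases[OF xz] by blast
  obtain b where b: "b \<in> T" "y = j b" using R_cases[OF yz] by blast
  have "(a, c) \<in> R" "(b, c) \<in> R" using xz yz ac b mem by simp_all
  hence "a = b \<or> (a, b) \<in> R \<or> (b, a) \<in> R" using R unfolding tree_order_def by blast
  thus "x = y \<or> (x, y) \<in> ?R \<or> (y, x) \<in> ?R" using ac b by blast
qed

context inaccessible_card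
begin

text \<open>An abstract \<open>k\<close>-Aronszajn tree: removing a small set of nodes leaves nodes and only a small
  set of new roots (for a tree of height \<open>k\<close> with small levels, because a small set of nodes lies
  below some level), and all chains are small.\<close>

definition aronszajn_tree :: "'b set \<Rightarrow> 'b rel \<Rightarrow> bool" where
  "aronszajn_tree T R \<longleftrightarrow> R \<subseteq> T \<times> T \<and> tree_order R \<and>
     (\<forall>S. S \<subseteq> T \<and> small S \<longrightarrow> T - S \<noteq> {} \<and> small {r \<in> T - S. \<forall>x. (x, r) \<in> R \<longrightarrow> x \<in> S}) \<and>
     (\<forall>C. C \<subseteq> T \<and> (\<forall>x\<in>C. \<forall>y\<in>C. x = y \<or> (x, y) \<in> R \<or> (y, x) \<in> R) \<longrightarrow> small C)"

lemma aronszajn_treeI: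
  assumes "R \<subseteq> T \<times> T" "tree_order R"
    and "\<And>S. S \<subseteq> T \<Longrightarrow> small S \<Longrightarrow>
      T - S \<noteq> {} \<and> small {r \<in> T - S. \<forall>x. (x, r) \<in> R \<longrightarrow> x \<in> S}"
    and "\<And>C. C \<subseteq> T \<Longrightarrow> \<forall>x\<in>C. \<forall>y\<in>C. x = y \<or> (x, y) \<in> R \<or> (y, x) \<in> R \<Longrightarrow> small C"
  shows "aronszajn_tree T R"
proof -
  have "\<forall>S. S \<subseteq> T \<and> small S \<longrightarrow>
      T - S \<noteq> {} \<and> small {r \<in> T - S. \<forall>x. (x, r) \<in> R \<longrightarrow> x \<in> S}"
    "\<forall>C. C \<subseteq> T \<and> (\<forall>x\<in>C. \<forall>y\<in>C. x = y \<or> (x, y) \<in> R \<or> (y, x) \<in> R) \<longrightarrow> small C"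
    using assms(3,4) by blast+
  thus ?thesis using assms(1,2) unfolding aronszajn_tree_def by simp
qed

lemma
  assumes "aronszajn_tree T R"
  shows aronszajn_tree_subset: "R \<subseteq> T \<times> T"
    and aronszajn_tree_order: "tree_order R"
    and aronszajn_tree_roots: "S \<subseteq> T \<Longrightarrow> small S \<Longrightarrow>
      T - S \<noteq> {} \<and> small {r \<in> T - S. \<forall>x. (x, r) \<in> R \<longrightarrow> x \<in> S}"
    and aronszajn_tree_chains: "C \<subseteq> T \<Longrightarrow> \<forall>x\<in>C. \<forall>y\<in>C. x = y \<or> (x, y) \<in> R \<or> (y, x) \<in> R \<Longrightarrow>
      small C"
  using assms unfolding aronszajn_tree_def by simp_all

lemma aronszajn_tree_kl_connected:
  assumes "aronszajn_tree T R"
  shows "kl_connected k k T (tree_edges R)"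
  unfolding kl_connected_def
proof (intro allI impI conjI)
  fix S assume "S \<subseteq> T \<and> |S| <o k"
  hence S: "S \<subseteq> T" "small S" unfolding small_def by blast+
  have R: "R \<subseteq> T \<times> T" "wf R"
    using aronszajn_tree_subset[OF assms] aronszajn_tree_order[OF assms] unfolding tree_order_def by simp_all
  have roots: "T - S \<noteq> {}" "small {r \<in> T - S. \<forall>x. (x, r) \<in> R \<longrightarrow> x \<in> S}"
    using aronszajn_tree_roots[OF assms S] by simp_all
  thus "components (tree_edges R) (T - S) \<noteq> {}" unfolding components_def by blast
  have "small (components (tree_edges R) (T - S))"
    by (rule small_subset[OF small_image[OF roots(2)] components_tree_edges_roots[OF R]])
  thus "|components (tree_edges R) (T - S)| <o k" unfolding small_def .
qed

lemma aronszajn_tree_no_complete_minor: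
  assumes "aronszajn_tree T R"
  shows "\<not> has_complete_minor k T (tree_edges R)"
proof
  note R = aronszajn_tree_order[OF assms] and chains_small = aronszajn_tree_chains[OF assms]
  assume "has_complete_minor k T (tree_edges R)"
  then obtain X where X1: "\<forall>u\<in>Field k. X u \<subseteq> T \<and> connected_set (tree_edges R) (X u)"
    and X2: "\<forall>u\<in>Field k. \<forall>w\<in>Field k. u \<noteq> w \<longrightarrow> X u \<inter> X w = {}"
    and X3: "\<forall>u\<in>Field k. \<forall>w\<in>Field k. u \<noteq> w \<longrightarrow> (\<exists>x\<in>X u. \<exists>y\<in>X w. {x, y} \<in> tree_edges R)"
    unfolding has_complete_minor_def by blast
  have "\<exists>r. r \<in> X u \<and> (\<forall>y\<in>X u. (r, y) \<in> R\<^sup>=)" if u: "u \<in> Field k" for u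
  proof -
    have "connected_set (tree_edges R) (X u)" using X1 u by blast
    thus ?thesis using connected_set_tree_edges_root[OF R] by metis
  qed
  then obtain r where r: "\<And>u. u \<in> Field k \<Longrightarrow> r u \<in> X u \<and> (\<forall>y\<in>X u. (r u, y) \<in> R\<^sup>=)"
    by metis
  have "inj_on r (Field k)"
  proof (rule inj_onI)
    fix u w assume uw: "u \<in> Field k" "w \<in> Field k" "r u = r w"
    have "r u \<in> X u" "r w \<in> X w" using r uw(1,2) by blast+
    hence "X u \<inter> X w \<noteq> {}" using uw(3) by auto
    thus "u = w" using X2 uw(1,2) by blast
  qed
  moreover have "small (r ` Field k)"
  proof (rule chains_small)
    show "r ` Field k \<subseteq> T" using r X1 by blast
    show "\<forall>x\<in>r ` Field k. \<forall>y\<in>r ` Field k. x = y \<or> (x, y) \<in> R \<or> (y, x) \<in> R"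
    proof (intro ballI)
      fix x y assume "x \<in> r ` Field k" "y \<in> r ` Field k"
      then obtain u w where uw: "u \<in> Field k" "w \<in> Field k" "x = r u" "y = r w" by blast
      show "x = y \<or> (x, y) \<in> R \<or> (y, x) \<in> R"
      proof (cases "u = w")
        case False
        then obtain p q where pq: "p \<in> X u" "q \<in> X w" "(p, q) \<in> R \<or> (q, p) \<in> R"
          using X3 uw(1,2) unfolding doubleton_in_tree_edges by blast
        have "(x, p) \<in> R\<^sup>=" "(y, q) \<in> R\<^sup>=" using r uw pq(1,2) by blast+
        thus ?thesis using tree_order_comparable_if_edge[OF R _ _ pq(3)] by blast
      qed (use uw in blast)
    qed
  qed
  ultimately show False using small_inj_on_imageD not_small_Field by blast
qed

lemma small_preimage_iff:
  assumes "inj_on j T" "A \<subseteq> j ` T"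
  shows "small {t \<in> T. j t \<in> A} \<longleftrightarrow> small A"
proof -
  have A: "A = j ` {t \<in> T. j t \<in> A}" using assms(2) by blast
  have "inj_on j {t \<in> T. j t \<in> A}" using assms(1) by (rule inj_on_subset) blast
  thus ?thesis using small_image[of "{t \<in> T. j t \<in> A}" j] small_inj_on_imageD[of j] A by auto
qed

lemma aronszajn_tree_image:
  assumes T: "aronszajn_tree T R" and j: "inj_on j T"
  shows "aronszajn_tree (j ` T) (map_prod j j ` R)"
proof (rule aronszajn_treeI)
  let ?R = "map_prod j j ` R"
  note RT = aronszajn_tree_subset[OF T]
  note mem = map_prod_image_mem_iff[OF j RT]
  show "?R \<subseteq> j ` T \<times> j ` T" using RT by blast
  show "tree_order ?R" by (rule tree_order_map_prod_image[OF j RT aronszajn_tree_order[OF T]])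
  show "j ` T - S \<noteq> {} \<and> small {r \<in> j ` T - S. \<forall>x. (x, r) \<in> ?R \<longrightarrow> x \<in> S}"
    if S: "S \<subseteq> j ` T" "small S" for S
  proof -
    define S0 where "S0 = {t \<in> T. j t \<in> S}"
    have S0: "S0 \<subseteq> T" "small S0" using small_preimage_iff[OF j S(1)] S(2) unfolding S0_def by auto
    note roots = aronszajn_tree_roots[OF T S0]
    have "j ` T - S = j ` (T - S0)" unfolding S0_def by blast
    hence "j ` T - S \<noteq> {}" using roots by blast
    moreover have "{r \<in> j ` T - S. \<forall>x. (x, r) \<in> ?R \<longrightarrow> x \<in> S}
        \<subseteq> j ` {r \<in> T - S0. \<forall>x. (x, r) \<in> R \<longrightarrow> x \<in> S0}"
      unfolding S0_def by (rule roots_map_prod_image_subset[OF RT])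
    hence "small {r \<in> j ` T - S. \<forall>x. (x, r) \<in> ?R \<longrightarrow> x \<in> S}"
      by (rule small_subset[OF small_image[OF conjunct2[OF roots]]])
    ultimately show ?thesis by blast
  qed
  show "small C"
    if C: "C \<subseteq> j ` T" "\<forall>x\<in>C. \<forall>y\<in>C. x = y \<or> (x, y) \<in> ?R \<or> (y, x) \<in> ?R" for C
  proof -
    have "\<forall>x\<in>{t \<in> T. j t \<in> C}. \<forall>y\<in>{t \<in> T. j t \<in> C}. x = y \<or> (x, y) \<in> R \<or> (y, x) \<in> R"
    proof (intro ballI)
      fix x y assume x: "x \<in> {t \<in> T. j t \<in> C}" and y: "y \<in> {t \<in> T. j t \<in> C}"
      have xT: "x \<in> T" and yT: "y \<in> T" using x y by blast+
      have "j x = j y \<or> (j x, j y) \<in> ?R \<or> (j y, j x) \<in> ?R" using C(2) x y by blast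
      thus "x = y \<or> (x, y) \<in> R \<or> (y, x) \<in> R"
        unfolding mem[OF xT yT] mem[OF yT xT] using inj_onD[OF j _ xT yT] by blast
    qed
    hence "small {t \<in> T. j t \<in> C}" by (rule aronszajn_tree_chains[OF T, rotated]) blast
    thus ?thesis using small_preimage_iff[OF j C(1)] by blast
  qed
qed

lemma aronszajn_tree_graph:
  assumes "aronszajn_tree T R" "|T| \<le>o |UNIV :: 'v set|"
  shows "\<exists>(V :: 'v set) E. graph V E \<and> kl_connected k k V E \<and> \<not> has_complete_minor k V E"
proof -
  obtain j :: "_ \<Rightarrow> 'v" where j: "inj_on j T"
    using card_of_ordLeq[of T "UNIV :: 'v set"] assms(2) by auto
  have T': "aronszajn_tree (j ` T) (map_prod j j ` R)" by (rule aronszajn_tree_image[OF assms(1) j])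
  have "graph (j ` T) (tree_edges (map_prod j j ` R))"
    using aronszajn_tree_subset[OF T'] aronszajn_tree_order[OF T']
    unfolding tree_order_def by (simp add: graph_tree_edges)
  thus ?thesis using aronszajn_tree_kl_connected[OF T'] aronszajn_tree_no_complete_minor[OF T'] by blast
qed

end

section \<open>Colourings without large homogeneous sets\<close>

definition homogeneous :: "('a set \<Rightarrow> bool) \<Rightarrow> 'a set \<Rightarrow> bool" where
  "homogeneous c H \<longleftrightarrow> (\<exists>b. \<forall>x\<in>H. \<forall>y\<in>H. x \<noteq> y \<longrightarrow> c {x, y} = b)"

context inaccessible_card
begin

lemma weakly_compact_iff_homogeneous:
  "weakly_compact k \<longleftrightarrow> (\<forall>c. \<exists>H\<subseteq>Field k. |H| =o k \<and> homogeneous c H)"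
  unfolding weakly_compact_def homogeneous_def using Card_order natLeq_ordLess by simp

text \<open>Along the closure points \<open>\<gamma>\<^sub>1 \<prec> \<gamma>\<^sub>2\<close> of \<open>w\<close>,
  the colour of \<open>{w \<gamma>\<^sub>1, w \<gamma>\<^sub>2}\<close> is decided by whether \<open>w \<gamma>\<^sub>1 \<in> F\<close>.\<close>

lemma homogeneous_set_of_branch:
  assumes w: "\<And>\<beta>. \<beta> \<in> Field k \<Longrightarrow> \<beta> \<prec> w \<beta> \<and> (\<forall>\<delta>. \<delta> \<prec> \<beta> \<longrightarrow> (\<delta> \<in> F \<longleftrightarrow> c {\<delta>, w \<beta>}))"
  obtains H where "H \<subseteq> Field k" "|H| =o k" "homogeneous c H"
proof -
  have wF: "w \<beta> \<in> Field k" if "\<beta> \<in> Field k" for \<beta> using w[OF that] prec_Field by blast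
  define G where "G = {\<gamma> \<in> Field k. \<forall>\<eta>. \<eta> \<prec> \<gamma> \<longrightarrow> w \<eta> \<prec> \<gamma>}"
  have G: "G \<subseteq> Field k" "\<not> small G" using closure_points_not_small[of w, OF wF] unfolding G_def by auto
  have w_step: "w \<gamma>\<^sub>1 \<prec> w \<gamma>\<^sub>2 \<and> c {w \<gamma>\<^sub>1, w \<gamma>\<^sub>2} = (w \<gamma>\<^sub>1 \<in> F)"
    if "\<gamma>\<^sub>1 \<in> G" "\<gamma>\<^sub>2 \<in> G" "\<gamma>\<^sub>1 \<prec> \<gamma>\<^sub>2" for \<gamma>\<^sub>1 \<gamma>\<^sub>2
  proof -
    have below: "w \<gamma>\<^sub>1 \<prec> \<gamma>\<^sub>2" using that unfolding G_def by blast
    have "\<gamma>\<^sub>2 \<prec> w \<gamma>\<^sub>2" "\<forall>\<delta>. \<delta> \<prec> \<gamma>\<^sub>2 \<longrightarrow> (\<delta> \<in> F \<longleftrightarrow> c {\<delta>, w \<gamma>\<^sub>2})"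
      using w that(2) G(1) by blast+
    thus ?thesis using prec_trans[OF below] below by blast
  qed
  have "inj_on w G"
  proof (rule inj_onI)
    fix x y assume xy: "x \<in> G" "y \<in> G" "w x = w y"
    show "x = y"
    proof (rule ccontr)
      assume "x \<noteq> y"
      hence "x \<prec> y \<or> y \<prec> x" using prec_trichotomy xy(1,2) G(1) by blast
      hence "w x \<prec> w y \<or> w y \<prec> w x" using w_step xy(1,2) by blast
      thus False using xy(3) prec_irrefl by simp
    qed
  qed
  hence W: "\<not> small (w ` G)" using small_inj_on_imageD G(2) by metis
  define H where "H b = {x \<in> w ` G. (x \<in> F) = b}" for b
  have "w ` G = H True \<union> H False" unfolding H_def by blast
  then obtain b where Hb: "\<not> small (H b)" using W small_Un by (metis (full_types))
  have HF: "H b \<subseteq> Field k" unfolding H_def using wF G(1) by blast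
  have "c {x, y} = b" if x: "x \<in> H b" and y: "y \<in> H b" and xy: "x \<noteq> y" for x y
  proof -
    obtain \<gamma>\<^sub>1 \<gamma>\<^sub>2 where \<gamma>: "\<gamma>\<^sub>1 \<in> G" "\<gamma>\<^sub>2 \<in> G" "x = w \<gamma>\<^sub>1" "y = w \<gamma>\<^sub>2"
      using x y unfolding H_def by blast
    hence "\<gamma>\<^sub>1 \<prec> \<gamma>\<^sub>2 \<or> \<gamma>\<^sub>2 \<prec> \<gamma>\<^sub>1" using prec_trichotomy xy G(1) by blast
    hence "c {x, y} = (x \<in> F) \<or> c {y, x} = (y \<in> F)" using w_step \<gamma> by blast
    moreover have "(x \<in> F) = b" "(y \<in> F) = b" using x y unfolding H_def by blast+
    ultimately show ?thesis by (auto simp: insert_commute)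
  qed
  hence "homogeneous c (H b)" unfolding homogeneous_def by (intro exI[of _ b]) blast
  thus ?thesis using that HF not_small_ordIso[OF HF Hb] by blast
qed

text \<open>\<open>colour_node c \<alpha> \<beta>\<close> encodes the restriction to \<open>{\<gamma>. \<gamma> \<prec> \<beta>}\<close> of the colour function
  \<open>\<gamma> \<mapsto> c {\<gamma>, \<alpha>}\<close>.\<close>

definition colour_node :: "('a set \<Rightarrow> bool) \<Rightarrow> 'a \<Rightarrow> 'a \<Rightarrow> 'a \<times> 'a set" where
  "colour_node c \<alpha> \<beta> = (\<beta>, {\<gamma>. \<gamma> \<prec> \<beta> \<and> c {\<gamma>, \<alpha>}})"

definition colour_tree :: "('a set \<Rightarrow> bool) \<Rightarrow> ('a \<times> 'a set) set" where
  "colour_tree c = {colour_node c \<alpha> \<beta> | \<alpha> \<beta>. \<beta> \<preceq> \<alpha>}"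

definition end_extension :: "('a \<times> 'a set) set \<Rightarrow> ('a \<times> 'a set) rel" where
  "end_extension T = {(s, t). s \<in> T \<and> t \<in> T \<and> fst s \<prec> fst t \<and> snd s = snd t \<inter> {\<gamma>. \<gamma> \<prec> fst s}}"

lemma tree_order_end_extension:
  assumes "\<And>t. t \<in> T \<Longrightarrow> fst t \<in> Field k"
  shows "tree_order (end_extension T)"
  unfolding tree_order_def
proof (intro conjI allI impI)
  have seg_mono: "{\<gamma>. \<gamma> \<prec> a} \<subseteq> {\<gamma>. \<gamma> \<prec> b}" if "a \<prec> b" for a b
    using that prec_trans by blast
  show "trans (end_extension T)"
  proof (rule transI)
    fix x y z assume xy: "(x, y) \<in> end_extension T" and yz: "(y, z) \<in> end_extension T"
    have lt: "fst x \<prec> fst y" "fst y \<prec> fst z" using xy yz unfolding end_extension_def by simp_all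
    have "snd x = snd z \<inter> {\<gamma>. \<gamma> \<prec> fst x}"
      using xy yz seg_mono[OF lt(1)] unfolding end_extension_def by auto
    thus "(x, z) \<in> end_extension T"
      using xy yz prec_trans[OF lt] unfolding end_extension_def by simp
  qed
  have "end_extension T \<subseteq> inv_image {(a, b). a \<prec> b} fst" unfolding end_extension_def by auto
  thus "wf (end_extension T)" using wf_subset wf_inv_image[OF wf_prec] by blast
  fix x y z assume xz: "(x, z) \<in> end_extension T" and yz: "(y, z) \<in> end_extension T"
  have T: "x \<in> T" "y \<in> T" using xz yz unfolding end_extension_def by simp_all
  have sx: "snd x = snd z \<inter> {\<gamma>. \<gamma> \<prec> fst x}" and sy: "snd y = snd z \<inter> {\<gamma>. \<gamma> \<prec> fst y}"
    using xz yz unfolding end_extension_def by simp_all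
  consider "fst x \<prec> fst y" | "fst x = fst y" | "fst y \<prec> fst x"
    using prec_trichotomy assms T by blast
  thus "x = y \<or> (x, y) \<in> end_extension T \<or> (y, x) \<in> end_extension T"
  proof cases
    case 1
    hence "snd x = snd y \<inter> {\<gamma>. \<gamma> \<prec> fst x}" using sx sy seg_mono[OF 1] by blast
    thus ?thesis using T 1 unfolding end_extension_def by simp
  next
    case 2
    thus ?thesis using sx sy by (simp add: prod_eq_iff)
  next
    case 3
    hence "snd y = snd x \<inter> {\<gamma>. \<gamma> \<prec> fst y}" using sx sy seg_mono[OF 3] by blast
    thus ?thesis using T 3 unfolding end_extension_def by simp
  qed
qed

lemma colour_tree_fst: "t \<in> colour_tree c \<Longrightarrow> fst t \<in> Field k"
  unfolding colour_tree_def colour_node_def using preceq_Field by auto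

lemma colour_node_below:
  assumes "\<beta> \<preceq> \<alpha>" "\<gamma> \<prec> \<beta>"
  shows "(colour_node c \<alpha> \<gamma>, colour_node c \<alpha> \<beta>) \<in> end_extension (colour_tree c)"
proof -
  have "\<gamma> \<preceq> \<alpha>" using prec_imp_preceq[OF prec_preceq_trans[OF assms(2,1)]] .
  hence "colour_node c \<alpha> \<gamma> \<in> colour_tree c" "colour_node c \<alpha> \<beta> \<in> colour_tree c"
    using assms(1) unfolding colour_tree_def by blast+
  moreover have "{\<delta>. \<delta> \<prec> \<gamma> \<and> c {\<delta>, \<alpha>}} = {\<delta>. \<delta> \<prec> \<beta> \<and> c {\<delta>, \<alpha>}} \<inter> {\<delta>. \<delta> \<prec> \<gamma>}"
    using prec_trans[OF _ assms(2)] by blast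
  ultimately show ?thesis using assms(2) unfolding end_extension_def colour_node_def by simp
qed

text \<open>The new roots lie at levels \<open>\<beta> \<preceq> g\<close> for a bound \<open>g\<close> of the levels of \<open>S\<close>; there are at most
  \<open>|{\<beta>. \<beta> \<preceq> g}| \<cdot> 2^|{\<beta>. \<beta> \<preceq> g}|\<close> such nodes, which is small as \<open>k\<close> is a strong limit.\<close>

lemma colour_tree_roots:
  assumes S: "S \<subseteq> colour_tree c" "small S"
  shows "colour_tree c - S \<noteq> {} \<and>
    small {r \<in> colour_tree c - S. \<forall>x. (x, r) \<in> end_extension (colour_tree c) \<longrightarrow> x \<in> S}"
proof
  have "fst ` S \<subseteq> Field k" using S(1) colour_tree_fst by blast
  then obtain g where g: "g \<in> Field k" "\<And>s. s \<in> fst ` S \<Longrightarrow> s \<prec> g"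
    using small_bounded small_image[OF S(2)] by metis
  show "colour_tree c - S \<noteq> {}"
  proof
    assume "colour_tree c - S = {}"
    moreover have "colour_node c g g \<in> colour_tree c" unfolding colour_tree_def using preceq_refl[OF g(1)] by blast
    ultimately have "colour_node c g g \<in> S" by blast
    hence "fst (colour_node c g g) \<in> fst ` S" by (rule imageI)
    hence "g \<in> fst ` S" by (simp add: colour_node_def)
    thus False using g(2) prec_irrefl by blast
  qed
  have "{r \<in> colour_tree c - S. \<forall>x. (x, r) \<in> end_extension (colour_tree c) \<longrightarrow> x \<in> S}
      \<subseteq> {\<beta>. \<beta> \<preceq> g} \<times> Pow {\<beta>. \<beta> \<preceq> g}"
  proof
    fix r assume r: "r \<in> {r \<in> colour_tree c - S. \<forall>x. (x, r) \<in> end_extension (colour_tree c) \<longrightarrow> x \<in> S}"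
    then obtain \<alpha> \<beta> where ab: "\<beta> \<preceq> \<alpha>" "r = colour_node c \<alpha> \<beta>" unfolding colour_tree_def by blast
    have \<beta>: "\<beta> \<in> Field k" using preceq_Field[OF ab(1)] by blast
    have "\<not> g \<prec> \<beta>"
    proof
      assume "g \<prec> \<beta>"
      hence "colour_node c \<alpha> g \<in> S" using colour_node_below[OF ab(1)] ab(2) r by blast
      hence "g \<prec> g" using g(2) unfolding colour_node_def by force
      thus False using prec_irrefl by blast
    qed
    hence \<beta>g: "\<beta> \<preceq> g" using not_prec[OF g(1) \<beta>] by blast
    have "snd r \<subseteq> {\<beta>. \<beta> \<preceq> g}"
      using ab(2) prec_imp_preceq[OF prec_preceq_trans[OF _ \<beta>g]] unfolding colour_node_def by auto
    thus "r \<in> {\<beta>. \<beta> \<preceq> g} \<times> Pow {\<beta>. \<beta> \<preceq> g}" using ab(2) \<beta>g by (simp add: colour_node_def mem_Times_iff)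
  qed
  moreover have "small ({\<beta>. \<beta> \<preceq> g} \<times> Pow {\<beta>. \<beta> \<preceq> g})"
    using small_Times[OF small_closed_initial_segment[OF g(1)] small_Pow[OF small_closed_initial_segment[OF g(1)]]] .
  ultimately show "small {r \<in> colour_tree c - S. \<forall>x. (x, r) \<in> end_extension (colour_tree c) \<longrightarrow> x \<in> S}"
    by (rule small_subset[rotated])
qed

lemma colour_tree_chain_Union:
  assumes C: "C \<subseteq> colour_tree c"
      "\<forall>x\<in>C. \<forall>y\<in>C. x = y \<or> (x, y) \<in> end_extension (colour_tree c) \<or> (y, x) \<in> end_extension (colour_tree c)"
    and t: "t \<in> C"
  shows "snd t = \<Union> (snd ` C) \<inter> {\<gamma>. \<gamma> \<prec> fst t}"
proof
  show "snd t \<subseteq> \<Union> (snd ` C) \<inter> {\<gamma>. \<gamma> \<prec> fst t}"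
    using t C(1) unfolding colour_tree_def colour_node_def by auto
  show "\<Union> (snd ` C) \<inter> {\<gamma>. \<gamma> \<prec> fst t} \<subseteq> snd t"
  proof
    fix \<gamma> assume "\<gamma> \<in> \<Union> (snd ` C) \<inter> {\<gamma>. \<gamma> \<prec> fst t}"
    then obtain t' where t': "t' \<in> C" "\<gamma> \<in> snd t'" "\<gamma> \<prec> fst t" by blast
    have "t' = t \<or> (t', t) \<in> end_extension (colour_tree c) \<or> (t, t') \<in> end_extension (colour_tree c)"
      using C(2) t t'(1) by blast
    thus "\<gamma> \<in> snd t" using t' unfolding end_extension_def by blast
  qed
qed

text \<open>A large chain gives a branch \<open>F\<close> (the union of its colour sets), to which
  \<open>homogeneous_set_of_branch\<close> applies.\<close>

lemma colour_tree_chains: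
  assumes no_hom: "\<And>H. H \<subseteq> Field k \<Longrightarrow> |H| =o k \<Longrightarrow> \<not> homogeneous c H"
    and C: "C \<subseteq> colour_tree c"
      "\<forall>x\<in>C. \<forall>y\<in>C. x = y \<or> (x, y) \<in> end_extension (colour_tree c) \<or> (y, x) \<in> end_extension (colour_tree c)"
  shows "small C"
proof (rule ccontr)
  let ?R = "end_extension (colour_tree c)"
  assume "\<not> small C"
  moreover have "inj_on fst C"
  proof (rule inj_onI)
    fix x y assume "x \<in> C" "y \<in> C" "fst x = fst y"
    thus "x = y" using C(2) prec_irrefl unfolding end_extension_def by force
  qed
  ultimately have fC: "\<not> small (fst ` C)" "fst ` C \<subseteq> Field k"
    using small_inj_on_imageD C(1) colour_tree_fst by blast+
  define F where "F = \<Union> (snd ` C)"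
  have F: "snd t = F \<inter> {\<gamma>. \<gamma> \<prec> fst t}" if "t \<in> C" for t
    using colour_tree_chain_Union[OF C that] unfolding F_def .
  have "\<exists>\<alpha>. \<beta> \<prec> \<alpha> \<and> (\<forall>\<delta>. \<delta> \<prec> \<beta> \<longrightarrow> (\<delta> \<in> F \<longleftrightarrow> c {\<delta>, \<alpha>}))" if \<beta>: "\<beta> \<in> Field k" for \<beta>
  proof -
    obtain \<beta>' where \<beta>': "\<beta>' \<in> fst ` C" "\<beta> \<prec> \<beta>'" using not_small_unbounded[OF fC(2,1) \<beta>] .
    then obtain t where t: "t \<in> C" "fst t = \<beta>'" by blast
    then obtain \<alpha> where \<alpha>: "\<beta>' \<preceq> \<alpha>" "t = colour_node c \<alpha> \<beta>'"
      using C(1) unfolding colour_tree_def colour_node_def by auto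
    have "{\<gamma>. \<gamma> \<prec> \<beta>' \<and> c {\<gamma>, \<alpha>}} = F \<inter> {\<gamma>. \<gamma> \<prec> \<beta>'}"
      using F[OF t(1)] \<alpha>(2) t(2) unfolding colour_node_def by simp
    moreover have "\<delta> \<prec> \<beta>'" if "\<delta> \<prec> \<beta>" for \<delta> using prec_trans[OF that \<beta>'(2)] .
    ultimately have "\<forall>\<delta>. \<delta> \<prec> \<beta> \<longrightarrow> (\<delta> \<in> F \<longleftrightarrow> c {\<delta>, \<alpha>})" by blast
    moreover have "\<beta> \<prec> \<alpha>" using prec_preceq_trans[OF \<beta>'(2) \<alpha>(1)] .
    ultimately show ?thesis by blast
  qed
  then obtain w where "\<And>\<beta>. \<beta> \<in> Field k \<Longrightarrow> \<beta> \<prec> w \<beta> \<and> (\<forall>\<delta>. \<delta> \<prec> \<beta> \<longrightarrow> (\<delta> \<in> F \<longleftrightarrow> c {\<delta>, w \<beta>}))"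
    by metis
  then obtain H where "H \<subseteq> Field k" "|H| =o k" "homogeneous c H" by (rule homogeneous_set_of_branch)
  thus False using no_hom by blast
qed

lemma colour_tree_ordLeq: "|colour_tree c| \<le>o |Field k|"
proof -
  have "colour_tree c \<subseteq> (\<lambda>(\<alpha>, \<beta>). colour_node c \<alpha> \<beta>) ` (Field k \<times> Field k)"
    unfolding colour_tree_def using preceq_Field by fastforce
  hence "|colour_tree c| \<le>o |Field k \<times> Field k|"
    using card_of_mono1 card_of_image ordLeq_transitive by metis
  thus ?thesis using card_of_Times_same_infinite[OF infinite_Field] ordLeq_ordIso_trans by metis
qed

lemma not_weakly_compact_graph:
  assumes "\<not> weakly_compact k" "|Field k| \<le>o |UNIV :: 'v set|"
  shows "\<exists>(V :: 'v set) E. graph V E \<and> kl_connected k k V E \<and> \<not> has_complete_minor k V E"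
proof -
  obtain c where no_hom: "\<And>H. H \<subseteq> Field k \<Longrightarrow> |H| =o k \<Longrightarrow> \<not> homogeneous c H"
    using assms(1) unfolding weakly_compact_iff_homogeneous by blast
  have "aronszajn_tree (colour_tree c) (end_extension (colour_tree c))"
  proof (rule aronszajn_treeI)
    show "end_extension (colour_tree c) \<subseteq> colour_tree c \<times> colour_tree c"
      unfolding end_extension_def by blast
    show "tree_order (end_extension (colour_tree c))"
      by (rule tree_order_end_extension[OF colour_tree_fst])
  qed (use colour_tree_roots colour_tree_chains[OF no_hom] in blast)+
  moreover have "|colour_tree c| \<le>o |UNIV :: 'v set|"
    using colour_tree_ordLeq assms(2) by (rule ordLeq_transitive)
  ultimately show ?thesis by (rule aronszajn_tree_graph)
qed

end

section \<open>Reduction to graphs with \<open>k\<close> vertices\<close>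

context inaccessible_card
begin

lemma kl_connected_restrict:
  assumes G: "kl_connected k k V E" and "V' \<subseteq> V" "\<not> small V'"
    and reflect: "\<And>S x y. S \<subseteq> V' \<Longrightarrow> small S \<Longrightarrow> x \<in> V' - S \<Longrightarrow> y \<in> V' - S \<Longrightarrow>
      (x, y) \<in> (adj_in E (V - S))\<^sup>* \<Longrightarrow> (x, y) \<in> (adj_in E (V' - S))\<^sup>*"
  shows "kl_connected k k V' E"
  unfolding kl_connected_def
proof (intro allI impI conjI)
  fix S assume "S \<subseteq> V' \<and> |S| <o k"
  hence S: "S \<subseteq> V'" "small S" unfolding small_def by blast+
  have "V' - S \<noteq> {}"
  proof
    assume "V' - S = {}"
    hence "small V'" using small_subset[OF S(2)] by blast
    thus False using assms(3) by blast
  qed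
  thus "components E (V' - S) \<noteq> {}" unfolding components_def by blast
  have "components E (V' - S) \<subseteq> (\<lambda>D. D \<inter> (V' - S)) ` components E (V - S)"
    using assms(2) reflect[OF S] by (intro components_subset_restrict) blast+
  moreover have "small (components E (V - S))"
    using G S assms(2) unfolding kl_connected_def small_def by blast
  ultimately show "|components E (V' - S) | <o k"
    unfolding small_def[symmetric] by (rule small_subset[OF small_image, rotated])
qed

lemma small_path_closure:
  assumes B: "B \<subseteq> V" "small B"
  shows "\<exists>B'. B \<subseteq> B' \<and> B' \<subseteq> V \<and> small B' \<and>
    (\<forall>S x y. S \<subseteq> B \<longrightarrow> x \<in> B - S \<longrightarrow> y \<in> B - S \<longrightarrow> (x, y) \<in> (adj_in E (V - S))\<^sup>* \<longrightarrow>
      (x, y) \<in> (adj_in E (B' - S))\<^sup>*)"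
proof -
  define I where "I = {(S, x, y). S \<subseteq> B \<and> x \<in> B - S \<and> y \<in> B - S \<and> (x, y) \<in> (adj_in E (V - S))\<^sup>*}"
  have "\<exists>P. finite P \<and> P \<subseteq> V - S \<and> x \<in> P \<and> y \<in> P \<and> connected_set E P"
    if "(S, x, y) \<in> I" for S x y
  proof -
    have "(x, y) \<in> (adj_in E (V - S))\<^sup>*" "x \<in> V - S" using that B(1) unfolding I_def by auto
    thus ?thesis by (rule rtrancl_adj_in_finite_connected)
  qed
  then obtain P where P: "\<And>S x y. (S, x, y) \<in> I \<Longrightarrow>
      finite (P S x y) \<and> P S x y \<subseteq> V - S \<and> x \<in> P S x y \<and> y \<in> P S x y \<and> connected_set E (P S x y)"
    by metis
  define B' where "B' = B \<union> (\<Union>(S, x, y)\<in>I. P S x y)"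
  have "small I"
    by (rule small_subset[OF small_Times[OF small_Pow[OF B(2)] small_Times[OF B(2) B(2)]]])
      (auto simp: I_def)
  moreover have "small (P S x y)" if "(S, x, y) \<in> I" for S x y using P[OF that] small_finite by blast
  ultimately have "small (\<Union>(S, x, y)\<in>I. P S x y)" by (intro small_UN) auto
  hence "small B'" unfolding B'_def using small_Un[OF B(2)] by blast
  moreover have "B' \<subseteq> V" unfolding B'_def using B(1) P by fastforce
  moreover have "(x, y) \<in> (adj_in E (B' - S))\<^sup>*"
    if "S \<subseteq> B" "x \<in> B - S" "y \<in> B - S" "(x, y) \<in> (adj_in E (V - S))\<^sup>*" for S x y
  proof -
    have Sxy: "(S, x, y) \<in> I" using that unfolding I_def by blast
    hence "P S x y \<subseteq> B' - S" using P unfolding B'_def by blast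
    moreover have "(x, y) \<in> (adj_in E (P S x y))\<^sup>*" using P[OF Sxy] unfolding connected_set_def by blast
    ultimately show ?thesis by (rule rtrancl_adj_in_mono)
  qed
  ultimately show ?thesis unfolding B'_def by blast
qed

lemma small_closure_chain:
  assumes cl: "\<And>B. B \<subseteq> V \<Longrightarrow> small B \<Longrightarrow> cl B \<subseteq> V \<and> small (cl B)" and seed: "seed ` Field k \<subseteq> V"
  shows "\<exists>A. (\<forall>\<alpha>. A \<alpha> = cl (insert (seed \<alpha>) (\<Union>\<beta>\<in>{\<beta>. \<beta> \<prec> \<alpha>}. A \<beta>))) \<and>
    (\<forall>\<alpha>\<in>Field k. insert (seed \<alpha>) (\<Union>\<beta>\<in>{\<beta>. \<beta> \<prec> \<alpha>}. A \<beta>) \<subseteq> V \<and>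
      small (insert (seed \<alpha>) (\<Union>\<beta>\<in>{\<beta>. \<beta> \<prec> \<alpha>}. A \<beta>)))"
proof -
  define below where "below A \<alpha> = insert (seed \<alpha>) (\<Union>\<beta>\<in>{\<beta>. \<beta> \<prec> \<alpha>}. A \<beta>)" for A \<alpha>
  define A where "A = wfrec {(a, b). a \<prec> b} (\<lambda>A \<alpha>. cl (below A \<alpha>))"
  have A_eq: "A \<alpha> = cl (below A \<alpha>)" for \<alpha>
  proof -
    have "A \<alpha> = cl (below (cut A {(a, b). a \<prec> b} \<alpha>) \<alpha>)" unfolding A_def by (rule wfrec[OF wf_prec])
    moreover have "below (cut A {(a, b). a \<prec> b} \<alpha>) \<alpha> = below A \<alpha>"
      unfolding below_def by (auto simp: cut_apply)
    ultimately show ?thesis by simp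
  qed
  have "below A \<alpha> \<subseteq> V \<and> small (below A \<alpha>)" if "\<alpha> \<in> Field k" for \<alpha>
    using that
  proof (induction \<alpha> rule: wf_induct[OF wf_prec])
    case (1 \<alpha>)
    have IH: "A \<beta> \<subseteq> V \<and> small (A \<beta>)" if "\<beta> \<prec> \<alpha>" for \<beta>
    proof -
      have "below A \<beta> \<subseteq> V \<and> small (below A \<beta>)" using 1 that prec_Field by blast
      hence "cl (below A \<beta>) \<subseteq> V \<and> small (cl (below A \<beta>))" using cl by blast
      thus ?thesis using A_eq[of \<beta>] by simp
    qed
    have "small (\<Union>\<beta>\<in>{\<beta>. \<beta> \<prec> \<alpha>}. A \<beta>)"
      using IH by (intro small_UN[OF small_initial_segment[OF 1(2)]]) blast
    thus ?case using IH seed 1(2) unfolding below_def by (auto intro: small_insert)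
  qed
  thus ?thesis using A_eq unfolding below_def by blast
qed

text \<open>\<open>V'\<close> is the union of the chain \<open>A \<alpha> = cl (insert (e0 \<alpha>) (\<Union>\<beta>\<prec>\<alpha>. A \<beta>))\<close>, where \<open>cl\<close> comes
  from \<open>small_path_closure\<close>. A small \<open>S\<close> together with two vertices of \<open>V'\<close> lies in
  \<open>\<Union>\<beta>\<prec>g. A \<beta>\<close> for some \<open>g\<close> by regularity, so \<open>cl\<close> provides a path between them inside
  \<open>V' - S\<close>.\<close>

lemma kl_connected_subgraph_ordIso:
  assumes G: "kl_connected k k V E"
  obtains V' where "V' \<subseteq> V" "|V'| =o k" "kl_connected k k V' E"
proof -
  have "\<not> small V"
  proof
    assume "small V"
    hence "components E (V - V) \<noteq> {}" using G unfolding kl_connected_def small_def by blast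
    thus False unfolding components_def by simp
  qed
  then obtain e0 where e0: "inj_on e0 (Field k)" "e0 ` Field k \<subseteq> V" by (rule not_small_embedding)
  obtain cl where cl: "\<And>B. B \<subseteq> V \<Longrightarrow> small B \<Longrightarrow> B \<subseteq> cl B \<and> cl B \<subseteq> V \<and> small (cl B) \<and>
      (\<forall>S x y. S \<subseteq> B \<longrightarrow> x \<in> B - S \<longrightarrow> y \<in> B - S \<longrightarrow> (x, y) \<in> (adj_in E (V - S))\<^sup>* \<longrightarrow>
        (x, y) \<in> (adj_in E (cl B - S))\<^sup>*)"
    using small_path_closure[where V = V and E = E] by metis
  have cl_small: "cl B \<subseteq> V \<and> small (cl B)" if "B \<subseteq> V" "small B" for B using cl[OF that] by blast
  obtain A where "(\<forall>\<alpha>. A \<alpha> = cl (insert (e0 \<alpha>) (\<Union>\<beta>\<in>{\<beta>. \<beta> \<prec> \<alpha>}. A \<beta>))) \<and>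
    (\<forall>\<alpha>\<in>Field k. insert (e0 \<alpha>) (\<Union>\<beta>\<in>{\<beta>. \<beta> \<prec> \<alpha>}. A \<beta>) \<subseteq> V \<and>
      small (insert (e0 \<alpha>) (\<Union>\<beta>\<in>{\<beta>. \<beta> \<prec> \<alpha>}. A \<beta>)))"
    using small_closure_chain[OF cl_small e0(2)] by (rule exE)
  note A_eq = conjunct1[OF this, rule_format] and below = conjunct2[OF this, rule_format]
  define V' where "V' = (\<Union>\<alpha>\<in>Field k. A \<alpha>)"
  have A: "insert (e0 \<alpha>) (\<Union>\<beta>\<in>{\<beta>. \<beta> \<prec> \<alpha>}. A \<beta>) \<subseteq> A \<alpha> \<and> A \<alpha> \<subseteq> V \<and> small (A \<alpha>)"
    if "\<alpha> \<in> Field k" for \<alpha>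
    using cl below[OF that] A_eq by metis
  have V'V: "V' \<subseteq> V" unfolding V'_def using A by blast
  have "e0 ` Field k \<subseteq> V'" unfolding V'_def using A by blast
  hence V'_large: "\<not> small V'" using small_subset small_inj_on_imageD[OF e0(1)] not_small_Field by metis
  have "|V'| \<le>o k" unfolding V'_def using A by (intro UN_small_ordLeq) blast
  hence "|V'| =o k" using V'_large unfolding small_def by (metis ordLeq_iff_ordLess_or_ordIso)
  moreover have "kl_connected k k V' E"
  proof (rule kl_connected_restrict[OF G V'V V'_large])
    fix S x y assume S: "S \<subseteq> V'" "small S" and xy: "x \<in> V' - S" "y \<in> V' - S"
      and path: "(x, y) \<in> (adj_in E (V - S))\<^sup>*"
    have "\<exists>\<alpha>. \<alpha> \<in> Field k \<and> v \<in> A \<alpha>" if "v \<in> V'" for v using that unfolding V'_def by blast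
    then obtain idx where idx: "\<And>v. v \<in> V' \<Longrightarrow> idx v \<in> Field k \<and> v \<in> A (idx v)" by metis
    have W: "insert x (insert y S) \<subseteq> V'" "small (insert x (insert y S))"
      using S xy small_insert[OF small_insert[OF S(2)]] by blast+
    obtain g where g: "g \<in> Field k" "\<And>a. a \<in> idx ` insert x (insert y S) \<Longrightarrow> a \<prec> g"
      using small_bounded[of "idx ` insert x (insert y S)"] small_image[OF W(2)] idx W(1) by blast
    have "insert x (insert y S) \<subseteq> insert (e0 g) (\<Union>\<beta>\<in>{\<beta>. \<beta> \<prec> g}. A \<beta>)"
      using W(1) idx g(2) by blast
    hence "(x, y) \<in> (adj_in E (A g - S))\<^sup>*"
      using cl below[OF g(1)] A_eq xy path by (metis Diff_iff insert_subset)
    thus "(x, y) \<in> (adj_in E (V' - S))\<^sup>*"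
      by (rule rtrancl_adj_in_mono[rotated]) (use g(1) V'_def in blast)
  qed
  ultimately show ?thesis using that V'V by blast
qed

end

section \<open>Complete minors from homogeneous sets\<close>

locale enumerated_graph = inaccessible_card k for k :: "'a rel" +
  fixes V :: "'v set" and E :: "'v set set" and e :: "'a \<Rightarrow> 'v"
  assumes enum: "bij_betw e (Field k) V" and kl_connected: "kl_connected k k V E"
begin

definition index :: "'v \<Rightarrow> 'a" where
  "index = inv_into (Field k) e"

definition tail :: "'a \<Rightarrow> 'v set" where
  "tail \<alpha> = V - e ` {\<beta>. \<beta> \<prec> \<alpha>}"

definition tail_comp :: "'a \<Rightarrow> 'v \<Rightarrow> 'v set" where
  "tail_comp \<alpha> x = (adj_in E (tail \<alpha>))\<^sup>* `` {x} \<inter> tail \<alpha>"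

lemma e_in_V: "\<beta> \<in> Field k \<Longrightarrow> e \<beta> \<in> V"
  using enum unfolding bij_betw_def by blast

lemma index_Field: "x \<in> V \<Longrightarrow> index x \<in> Field k"
  unfolding index_def using enum inv_into_into unfolding bij_betw_def by metis

lemma e_index: "x \<in> V \<Longrightarrow> e (index x) = x"
  unfolding index_def using enum f_inv_into_f unfolding bij_betw_def by metis

lemma tail_subset: "tail \<alpha> \<subseteq> V"
  unfolding tail_def by blast

lemma tail_antimono: "\<alpha> \<preceq> \<beta> \<Longrightarrow> tail \<beta> \<subseteq> tail \<alpha>"
  unfolding tail_def using prec_preceq_trans by blast

lemma e_in_tail_iff:
  assumes "\<beta> \<in> Field k"
  shows "e \<beta> \<in> tail \<alpha> \<longleftrightarrow> \<not> \<beta> \<prec> \<alpha>"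
proof -
  have "e \<beta> = e \<gamma> \<Longrightarrow> \<gamma> \<prec> \<alpha> \<Longrightarrow> \<beta> = \<gamma>" for \<gamma>
    using enum assms prec_Field unfolding bij_betw_def inj_on_def by blast
  thus ?thesis unfolding tail_def using e_in_V[OF assms] by blast
qed

lemma small_components_tail:
  assumes "\<alpha> \<in> Field k"
  shows "small (components E (tail \<alpha>))"
proof -
  have "e ` {\<beta>. \<beta> \<prec> \<alpha>} \<subseteq> V" using e_in_V prec_Field by blast
  moreover have "small (e ` {\<beta>. \<beta> \<prec> \<alpha>})" by (rule small_image[OF small_initial_segment[OF assms]])
  ultimately show ?thesis
    using kl_connected[unfolded kl_connected_def, rule_format, of "e ` {\<beta>. \<beta> \<prec> \<alpha>}"]
    unfolding tail_def small_def by blast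
qed

lemma mem_tail_comp_iff: "y \<in> tail_comp \<alpha> x \<longleftrightarrow> (x, y) \<in> (adj_in E (tail \<alpha>))\<^sup>* \<and> y \<in> tail \<alpha>"
  unfolding tail_comp_def by simp

lemma tail_comp_self: "x \<in> tail \<alpha> \<Longrightarrow> x \<in> tail_comp \<alpha> x"
  unfolding mem_tail_comp_iff by simp

lemma tail_comp_subset_tail: "tail_comp \<alpha> x \<subseteq> tail \<alpha>"
  unfolding tail_comp_def by blast

lemma tail_comp_in_components: "x \<in> tail \<alpha> \<Longrightarrow> tail_comp \<alpha> x \<in> components E (tail \<alpha>)"
  unfolding components_def tail_comp_def by blast

lemma components_tail_cases: "D \<in> components E (tail \<alpha>) \<Longrightarrow> \<exists>x\<in>tail \<alpha>. D = tail_comp \<alpha> x"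
  unfolding components_def tail_comp_def by blast

lemma tail_comp_eq: "y \<in> tail_comp \<alpha> x \<Longrightarrow> tail_comp \<alpha> y = tail_comp \<alpha> x"
  unfolding tail_comp_def using Image_rtrancl_adj_in_eq by fastforce

lemma tail_comp_subset_below:
  assumes "\<gamma> \<preceq> \<alpha>"
  shows "tail_comp \<alpha> x \<subseteq> tail_comp \<gamma> x"
proof
  fix y assume "y \<in> tail_comp \<alpha> x"
  hence "(x, y) \<in> (adj_in E (tail \<alpha>))\<^sup>*" "y \<in> tail \<alpha>" unfolding mem_tail_comp_iff by blast+
  thus "y \<in> tail_comp \<gamma> x"
    unfolding mem_tail_comp_iff using rtrancl_adj_in_mono[OF tail_antimono[OF assms]] tail_antimono[OF assms]
    by blast
qed

lemma tail_comp_below: "\<gamma> \<preceq> \<alpha> \<Longrightarrow> y \<in> tail_comp \<alpha> x \<Longrightarrow> tail_comp \<gamma> y = tail_comp \<gamma> x"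
  using tail_comp_subset_below tail_comp_eq by blast

text \<open>A pair \<open>a \<prec> b\<close> is coloured by comparing, in a fixed well-order of vertex sets, the
  components of \<open>e a\<close> and \<open>e b\<close> at the first stage \<open>\<delta>\<close> at which they are separated.\<close>

definition comp_order :: "'v set rel" where
  "comp_order = (SOME r. well_order_on UNIV r)"

definition split_colour :: "'a set \<Rightarrow> bool" where
  "split_colour P \<longleftrightarrow> (\<exists>a b \<delta>. P = {a, b} \<and> a \<prec> b \<and> \<delta> \<preceq> a \<and> tail_comp \<delta> (e a) \<noteq> tail_comp \<delta> (e b) \<and>
      (\<forall>\<gamma>. \<gamma> \<prec> \<delta> \<longrightarrow> tail_comp \<gamma> (e a) = tail_comp \<gamma> (e b)) \<and> (tail_comp \<delta> (e a), tail_comp \<delta> (e b)) \<in> comp_order)"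

lemma comp_order_strict_total: "P \<noteq> Q \<Longrightarrow> (P, Q) \<in> comp_order \<longleftrightarrow> (Q, P) \<notin> comp_order"
proof -
  have "well_order_on UNIV comp_order" unfolding comp_order_def by (rule someI_ex[OF well_order_on])
  thus "P \<noteq> Q \<Longrightarrow> ?thesis"
    unfolding well_order_on_def linear_order_on_def partial_order_on_def total_on_def antisym_def by blast
qed

lemma split_colour_iff:
  assumes \<alpha>: "\<alpha> \<in> Field k"
    and \<delta>: "\<delta> \<preceq> \<alpha>" "tail_comp \<delta> p \<noteq> tail_comp \<delta> q" "\<forall>\<gamma>. \<gamma> \<prec> \<delta> \<longrightarrow> tail_comp \<gamma> p = tail_comp \<gamma> q"
    and xy: "x \<in> Field k" "e x \<in> tail_comp \<alpha> p" "e y \<in> tail_comp \<alpha> q" "x \<prec> y"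
  shows "split_colour {x, y} \<longleftrightarrow> (tail_comp \<delta> p, tail_comp \<delta> q) \<in> comp_order"
proof -
  have "\<not> x \<prec> \<alpha>" using xy(1,2) tail_comp_subset_tail e_in_tail_iff by blast
  hence \<alpha>x: "\<alpha> \<preceq> x" using not_prec[OF xy(1) \<alpha>] by blast
  have cx: "tail_comp \<gamma> (e x) = tail_comp \<gamma> p" and cy: "tail_comp \<gamma> (e y) = tail_comp \<gamma> q" if "\<gamma> \<preceq> \<alpha>" for \<gamma>
    using tail_comp_below[OF that xy(2)] tail_comp_below[OF that xy(3)] by blast+
  have below: "\<gamma> \<preceq> \<alpha>" if "\<gamma> \<prec> \<delta>" for \<gamma> using prec_imp_preceq[OF prec_preceq_trans[OF that \<delta>(1)]] .
  show ?thesis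
  proof
    assume "(tail_comp \<delta> p, tail_comp \<delta> q) \<in> comp_order"
    moreover have "\<delta> \<preceq> x" using preceq_trans[OF \<delta>(1) \<alpha>x] .
    moreover have "tail_comp \<delta> (e x) \<noteq> tail_comp \<delta> (e y)" using cx[OF \<delta>(1)] cy[OF \<delta>(1)] \<delta>(2) by simp
    moreover have "\<forall>\<gamma>. \<gamma> \<prec> \<delta> \<longrightarrow> tail_comp \<gamma> (e x) = tail_comp \<gamma> (e y)" using cx cy below \<delta>(3) by simp
    ultimately show "split_colour {x, y}"
      unfolding split_colour_def using xy(4) cx[OF \<delta>(1)] cy[OF \<delta>(1)] by metis
  next
    assume "split_colour {x, y}"
    then obtain a b \<delta>' where w: "{x, y} = {a, b}" "a \<prec> b" "\<delta>' \<preceq> a" "tail_comp \<delta>' (e a) \<noteq> tail_comp \<delta>' (e b)"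
      "\<forall>\<gamma>. \<gamma> \<prec> \<delta>' \<longrightarrow> tail_comp \<gamma> (e a) = tail_comp \<gamma> (e b)" "(tail_comp \<delta>' (e a), tail_comp \<delta>' (e b)) \<in> comp_order"
      unfolding split_colour_def by blast
    have "a = x" "b = y" using w(1,2) xy(4) prec_asym unfolding doubleton_eq_iff by blast+
    have "\<delta>' = \<delta>"
    proof (rule ccontr)
      assume "\<delta>' \<noteq> \<delta>"
      hence "\<delta>' \<prec> \<delta> \<or> \<delta> \<prec> \<delta>'" using prec_trichotomy preceq_Field \<delta>(1) w(3) by blast
      thus False
      proof
        assume "\<delta>' \<prec> \<delta>"
        thus False using w(4) \<delta>(3) cx[OF below] cy[OF below] \<open>a = x\<close> \<open>b = y\<close> by metis
      next
        assume "\<delta> \<prec> \<delta>'"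
        thus False using w(5) \<delta>(2) cx[OF \<delta>(1)] cy[OF \<delta>(1)] \<open>a = x\<close> \<open>b = y\<close> by metis
      qed
    qed
    thus "(tail_comp \<delta> p, tail_comp \<delta> q) \<in> comp_order"
      using w(6) \<open>a = x\<close> \<open>b = y\<close> cx[OF \<delta>(1)] cy[OF \<delta>(1)] by simp
  qed
qed

end

locale homogeneous_enumeration = enumerated_graph k V E e
  for k :: "'a rel" and V :: "'v set" and E :: "'v set set" and e :: "'a \<Rightarrow> 'v" +
  fixes H :: "'a set"
  assumes H_Field: "H \<subseteq> Field k" and H_ordIso: "|H| =o k"
    and H_homogeneous: "homogeneous split_colour H"
begin

definition hits :: "'v set \<Rightarrow> 'a set" where
  "hits D = {a \<in> H. e a \<in> D}"

lemma hits_Field: "hits D \<subseteq> Field k"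
  unfolding hits_def using H_Field by blast

text \<open>Two large components of \<open>tail \<alpha>\<close> would give pairs \<open>a\<^sub>1 \<prec> b\<^sub>1\<close> and \<open>b\<^sub>2 \<prec> a\<^sub>2\<close> in \<open>H\<close>, with
  \<open>a\<^sub>i\<close> in the first and \<open>b\<^sub>i\<close> in the second, which get opposite colours.\<close>

lemma large_component_unique:
  assumes \<alpha>: "\<alpha> \<in> Field k" and D: "D\<^sub>1 \<in> components E (tail \<alpha>)" "D\<^sub>2 \<in> components E (tail \<alpha>)"
    and large: "\<not> small (hits D\<^sub>1)" "\<not> small (hits D\<^sub>2)"
  shows "D\<^sub>1 = D\<^sub>2"
proof (rule ccontr)
  assume "D\<^sub>1 \<noteq> D\<^sub>2"
  obtain p q where pq: "D\<^sub>1 = tail_comp \<alpha> p" "D\<^sub>2 = tail_comp \<alpha> q" using components_tail_cases D by metis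
  define \<Sigma> where "\<Sigma> = {\<gamma>. \<gamma> \<preceq> \<alpha> \<and> tail_comp \<gamma> p \<noteq> tail_comp \<gamma> q}"
  have "\<alpha> \<in> \<Sigma>" unfolding \<Sigma>_def using preceq_refl[OF \<alpha>] \<open>D\<^sub>1 \<noteq> D\<^sub>2\<close> pq by simp
  then obtain \<delta> where \<delta>: "\<delta> \<in> \<Sigma>" "\<And>\<gamma>. \<gamma> \<prec> \<delta> \<Longrightarrow> \<gamma> \<notin> \<Sigma>" by (rule prec_minimal) blast
  have \<delta>\<alpha>: "\<delta> \<preceq> \<alpha>" and sep: "tail_comp \<delta> p \<noteq> tail_comp \<delta> q" using \<delta>(1) unfolding \<Sigma>_def by blast+
  have before: "\<forall>\<gamma>. \<gamma> \<prec> \<delta> \<longrightarrow> tail_comp \<gamma> p = tail_comp \<gamma> q"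
    using \<delta>(2) prec_imp_preceq[OF prec_preceq_trans[OF _ \<delta>\<alpha>]] unfolding \<Sigma>_def by blast
  obtain a\<^sub>1 where a\<^sub>1: "a\<^sub>1 \<in> hits D\<^sub>1" using large(1) small_finite by fastforce
  obtain b\<^sub>1 where b\<^sub>1: "b\<^sub>1 \<in> hits D\<^sub>2" "a\<^sub>1 \<prec> b\<^sub>1"
    using not_small_unbounded[OF hits_Field large(2)] a\<^sub>1 hits_Field by blast
  obtain b\<^sub>2 where b\<^sub>2: "b\<^sub>2 \<in> hits D\<^sub>2" using large(2) small_finite by fastforce
  obtain a\<^sub>2 where a\<^sub>2: "a\<^sub>2 \<in> hits D\<^sub>1" "b\<^sub>2 \<prec> a\<^sub>2"
    using not_small_unbounded[OF hits_Field large(1)] b\<^sub>2 hits_Field by blast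
  obtain c where c: "\<forall>x\<in>H. \<forall>y\<in>H. x \<noteq> y \<longrightarrow> split_colour {x, y} = c"
    using H_homogeneous unfolding homogeneous_def by (elim exE)
  have "split_colour {a\<^sub>1, b\<^sub>1} \<longleftrightarrow> (tail_comp \<delta> p, tail_comp \<delta> q) \<in> comp_order"
    using a\<^sub>1 b\<^sub>1 hits_Field pq unfolding hits_def by (intro split_colour_iff[OF \<alpha> \<delta>\<alpha> sep before]) auto
  moreover have "split_colour {b\<^sub>2, a\<^sub>2} \<longleftrightarrow> (tail_comp \<delta> q, tail_comp \<delta> p) \<in> comp_order"
    using a\<^sub>2 b\<^sub>2 hits_Field pq sep before unfolding hits_def
    by (intro split_colour_iff[OF \<alpha> \<delta>\<alpha>]) (auto simp: eq_commute[of "tail_comp _ p"])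
  moreover have "split_colour {a\<^sub>1, b\<^sub>1} = c" "split_colour {b\<^sub>2, a\<^sub>2} = c"
    using a\<^sub>1 b\<^sub>1 a\<^sub>2 b\<^sub>2 c prec_irrefl unfolding hits_def by (metis (no_types, lifting) mem_Collect_eq)+
  ultimately show False using comp_order_strict_total[OF sep] by blast
qed

lemma large_component_exists:
  assumes \<alpha>: "\<alpha> \<in> Field k"
  shows "\<exists>D\<in>components E (tail \<alpha>). \<not> small (hits D)"
proof (rule ccontr)
  assume "\<not> ?thesis"
  hence "small (\<Union>D\<in>components E (tail \<alpha>). hits D)"
    by (intro small_UN[OF small_components_tail[OF \<alpha>]]) blast
  moreover have "H - {\<beta>. \<beta> \<prec> \<alpha>} \<subseteq> (\<Union>D\<in>components E (tail \<alpha>). hits D)"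
  proof
    fix x assume x: "x \<in> H - {\<beta>. \<beta> \<prec> \<alpha>}"
    hence "e x \<in> tail \<alpha>" using e_in_tail_iff H_Field by blast
    thus "x \<in> (\<Union>D\<in>components E (tail \<alpha>). hits D)"
      using x tail_comp_in_components tail_comp_self unfolding hits_def by blast
  qed
  ultimately have "small (H - {\<beta>. \<beta> \<prec> \<alpha>})" by (rule small_subset)
  hence "small ((H - {\<beta>. \<beta> \<prec> \<alpha>}) \<union> {\<beta>. \<beta> \<prec> \<alpha>})" by (rule small_Un[OF _ small_initial_segment[OF \<alpha>]])
  hence "small H" by (rule small_subset) blast
  thus False using ordIso_not_small[OF H_ordIso] by blast
qed

definition main_comp :: "'a \<Rightarrow> 'v set" where
  "main_comp \<alpha> = (THE D. D \<in> components E (tail \<alpha>) \<and> \<not> small (hits D))"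

lemma main_comp:
  assumes "\<alpha> \<in> Field k"
  shows "main_comp \<alpha> \<in> components E (tail \<alpha>) \<and> \<not> small (hits (main_comp \<alpha>))"
proof -
  have "\<exists>!D. D \<in> components E (tail \<alpha>) \<and> \<not> small (hits D)"
    using large_component_exists[OF assms] large_component_unique[OF assms] by blast
  thus ?thesis unfolding main_comp_def by (rule theI')
qed

lemma main_comp_subset_tail: "\<alpha> \<in> Field k \<Longrightarrow> main_comp \<alpha> \<subseteq> tail \<alpha>"
  using main_comp components_tail_cases tail_comp_subset_tail by metis

lemma main_comp_nonempty: "\<alpha> \<in> Field k \<Longrightarrow> main_comp \<alpha> \<noteq> {}"
  using main_comp[of \<alpha>] small_finite[of "hits {}"] unfolding hits_def by auto

lemma main_comp_eq_tail_comp: "\<alpha> \<in> Field k \<Longrightarrow> x \<in> main_comp \<alpha> \<Longrightarrow> main_comp \<alpha> = tail_comp \<alpha> x"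
  using main_comp components_tail_cases tail_comp_eq by metis

lemma main_comp_antimono:
  assumes "\<alpha> \<preceq> \<beta>"
  shows "main_comp \<beta> \<subseteq> main_comp \<alpha>"
proof -
  have \<alpha>: "\<alpha> \<in> Field k" and \<beta>: "\<beta> \<in> Field k" using preceq_Field[OF assms] by blast+
  obtain x where x: "x \<in> main_comp \<beta>" using main_comp_nonempty[OF \<beta>] by blast
  have sub: "main_comp \<beta> \<subseteq> tail_comp \<alpha> x"
    using main_comp_eq_tail_comp[OF \<beta> x] tail_comp_subset_below[OF assms] by simp
  have "x \<in> tail \<alpha>" using x main_comp_subset_tail[OF \<beta>] tail_antimono[OF assms] by blast
  moreover have "hits (main_comp \<beta>) \<subseteq> hits (tail_comp \<alpha> x)" using sub unfolding hits_def by blast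
  hence "\<not> small (hits (tail_comp \<alpha> x))" using main_comp[OF \<beta>] small_subset by metis
  ultimately have "tail_comp \<alpha> x = main_comp \<alpha>"
    using large_component_unique[OF \<alpha> tail_comp_in_components conjunct1[OF main_comp[OF \<alpha>]]]
      main_comp[OF \<alpha>] by blast
  thus ?thesis using sub by simp
qed

lemma walk_into_main_comp:
  assumes \<alpha>g: "\<alpha> \<preceq> g" and x0: "x0 \<in> main_comp \<alpha>" "x0 \<notin> tail g"
  obtains y z where "y \<in> main_comp \<alpha>" "y \<notin> tail g" "z \<in> main_comp g" "{y, z} \<in> E"
proof (rule ccontr)
  assume "\<not> thesis"
  hence no_edge: "\<not> (y \<in> main_comp \<alpha> \<and> y \<notin> tail g \<and> z \<in> main_comp g \<and> {y, z} \<in> E)" for y z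
    using that by blast
  have \<alpha>: "\<alpha> \<in> Field k" and g: "g \<in> Field k" using preceq_Field[OF \<alpha>g] by blast+
  have main_\<alpha>: "main_comp \<alpha> = tail_comp \<alpha> x0" using main_comp_eq_tail_comp[OF \<alpha> x0(1)] .
  have "y \<in> main_comp \<alpha> \<and> y \<notin> main_comp g" if "(x0, y) \<in> (adj_in E (tail \<alpha>))\<^sup>*" for y
    using that
  proof (induction rule: rtrancl_induct)
    case base
    thus ?case using x0 main_comp_subset_tail[OF g] by blast
  next
    case (step y y')
    have y: "y \<in> main_comp \<alpha>" "y \<notin> main_comp g" using step.IH by blast+
    have adj: "y \<in> tail \<alpha>" "y' \<in> tail \<alpha>" "{y, y'} \<in> E" using step.hyps(2) unfolding adj_in_def by blast+
    have "y' \<in> main_comp \<alpha>"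
      using rtrancl_into_rtrancl[OF step.hyps] adj(2) main_\<alpha> mem_tail_comp_iff by simp
    moreover have "y' \<notin> main_comp g"
    proof
      assume y'g: "y' \<in> main_comp g"
      hence "y \<in> tail g" using no_edge y(1) adj(3) by blast
      moreover have "y' \<in> tail g" using y'g main_comp_subset_tail[OF g] by blast
      ultimately have "(y', y) \<in> adj_in E (tail g)"
        using adj(3) unfolding adj_in_def by (simp add: insert_commute)
      hence "y \<in> tail_comp g y'" using \<open>y \<in> tail g\<close> unfolding mem_tail_comp_iff by blast
      thus False using main_comp_eq_tail_comp[OF g y'g] y(2) by blast
    qed
    ultimately show ?case by blast
  qed
  moreover obtain z where z: "z \<in> main_comp g" using main_comp_nonempty[OF g] by blast
  moreover have "z \<in> tail_comp \<alpha> x0" using z main_comp_antimono[OF \<alpha>g] main_\<alpha> by blast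
  ultimately show False unfolding mem_tail_comp_iff by blast
qed

text \<open>Otherwise every \<open>u \<in> main_comp \<alpha>\<close> has no neighbour in \<open>main_comp (f u)\<close> for some \<open>f u\<close>.
  At a closure point \<open>g\<close> of \<open>f \<circ> e\<close> this holds for \<open>main_comp g\<close> and every \<open>u\<close> enumerated before
  \<open>g\<close>, which contradicts \<open>walk_into_main_comp\<close>.\<close>

lemma exists_anchor:
  assumes \<alpha>: "\<alpha> \<in> Field k"
  shows "\<exists>u\<in>main_comp \<alpha>. \<forall>\<beta>. \<alpha> \<preceq> \<beta> \<longrightarrow> (\<exists>z\<in>main_comp \<beta>. {u, z} \<in> E)"
proof (rule ccontr)
  assume "\<not> ?thesis"
  hence "\<exists>\<beta>. \<alpha> \<preceq> \<beta> \<and> \<not> (\<exists>z\<in>main_comp \<beta>. {u, z} \<in> E)" if "u \<in> main_comp \<alpha>" for u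
    using that by blast
  then obtain f where f: "\<And>u. u \<in> main_comp \<alpha> \<Longrightarrow> \<alpha> \<preceq> f u \<and> \<not> (\<exists>z\<in>main_comp (f u). {u, z} \<in> E)"
    by metis
  define h where "h \<eta> = (if e \<eta> \<in> main_comp \<alpha> then f (e \<eta>) else \<alpha>)" for \<eta>
  have h: "h \<eta> \<in> Field k" if "\<eta> \<in> Field k" for \<eta>
    unfolding h_def using f preceq_Field \<alpha> by auto
  obtain x0 where x0: "x0 \<in> main_comp \<alpha>" using main_comp_nonempty[OF \<alpha>] by blast
  have x0V: "x0 \<in> V" using x0 main_comp_subset_tail[OF \<alpha>] tail_subset by blast
  define a0 where "a0 = (if index x0 \<prec> \<alpha> then \<alpha> else index x0)"
  have a0: "a0 \<in> Field k" "index x0 \<preceq> a0" "\<alpha> \<preceq> a0"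
    unfolding a0_def using \<alpha> index_Field[OF x0V] prec_imp_preceq preceq_refl not_prec by auto
  obtain g where g: "g \<in> Field k" "a0 \<prec> g" "\<And>x. x \<prec> g \<Longrightarrow> h x \<prec> g"
    using closure_point[of h, OF h a0(1)] by blast
  have \<alpha>g: "\<alpha> \<preceq> g" using prec_imp_preceq[OF preceq_prec_trans[OF a0(3) g(2)]] .
  have "x0 \<in> e ` {\<beta>. \<beta> \<prec> g}"
    using imageI[of "index x0" _ e] e_index[OF x0V] preceq_prec_trans[OF a0(2) g(2)] by simp
  hence "x0 \<notin> tail g" unfolding tail_def by blast
  then obtain y z where yz: "y \<in> main_comp \<alpha>" "y \<notin> tail g" "z \<in> main_comp g" "{y, z} \<in> E"
    using walk_into_main_comp[OF \<alpha>g x0] by blast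
  have "y \<in> V" using yz(1) main_comp_subset_tail[OF \<alpha>] tail_subset by blast
  then obtain \<eta> where \<eta>: "\<eta> \<prec> g" "y = e \<eta>" using yz(2) unfolding tail_def by blast
  hence "f y \<prec> g" using g(3)[OF \<eta>(1)] yz(1) unfolding h_def by simp
  hence "main_comp g \<subseteq> main_comp (f y)" using main_comp_antimono prec_imp_preceq by blast
  thus False using f[OF yz(1)] yz(3,4) by blast
qed

definition anchor :: "'a \<Rightarrow> 'v" where
  "anchor \<alpha> = (SOME u. u \<in> main_comp \<alpha> \<and> (\<forall>\<beta>. \<alpha> \<preceq> \<beta> \<longrightarrow> (\<exists>z\<in>main_comp \<beta>. {u, z} \<in> E)))"

lemma anchor:
  "\<alpha> \<in> Field k \<Longrightarrow> anchor \<alpha> \<in> main_comp \<alpha> \<and> (\<forall>\<beta>. \<alpha> \<preceq> \<beta> \<longrightarrow> (\<exists>z\<in>main_comp \<beta>. {anchor \<alpha>, z} \<in> E))"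
  unfolding anchor_def using exists_anchor by (rule someI2_bex)

definition link :: "'a \<Rightarrow> 'a \<Rightarrow> 'v" where
  "link \<alpha> \<eta> = (SOME z. z \<in> main_comp \<alpha> \<and> {anchor \<eta>, z} \<in> E)"

lemma link: "\<eta> \<prec> \<alpha> \<Longrightarrow> link \<alpha> \<eta> \<in> main_comp \<alpha> \<and> {anchor \<eta>, link \<alpha> \<eta>} \<in> E"
  unfolding link_def using anchor prec_Field prec_imp_preceq by (metis (no_types, lifting) someI_ex)

definition path_set :: "'a \<Rightarrow> 'a \<Rightarrow> 'v set" where
  "path_set \<alpha> \<eta> = (SOME P. finite P \<and> P \<subseteq> tail \<alpha> \<and> anchor \<alpha> \<in> P \<and> link \<alpha> \<eta> \<in> P \<and> connected_set E P)"

lemma path_set: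
  assumes "\<eta> \<prec> \<alpha>"
  shows "finite (path_set \<alpha> \<eta>) \<and> path_set \<alpha> \<eta> \<subseteq> main_comp \<alpha> \<and> anchor \<alpha> \<in> path_set \<alpha> \<eta> \<and>
    link \<alpha> \<eta> \<in> path_set \<alpha> \<eta> \<and> connected_set E (path_set \<alpha> \<eta>)"
proof -
  have \<alpha>: "\<alpha> \<in> Field k" using prec_Field[OF assms] by blast
  have u: "anchor \<alpha> \<in> main_comp \<alpha>" using anchor[OF \<alpha>] by blast
  have main: "main_comp \<alpha> = tail_comp \<alpha> (anchor \<alpha>)" using main_comp_eq_tail_comp[OF \<alpha> u] .
  have "(anchor \<alpha>, link \<alpha> \<eta>) \<in> (adj_in E (tail \<alpha>))\<^sup>*"
    using link[OF assms] main mem_tail_comp_iff by blast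
  moreover have "anchor \<alpha> \<in> tail \<alpha>" using u main_comp_subset_tail[OF \<alpha>] by blast
  ultimately have "\<exists>P. finite P \<and> P \<subseteq> tail \<alpha> \<and> anchor \<alpha> \<in> P \<and> link \<alpha> \<eta> \<in> P \<and> connected_set E P"
    by (rule rtrancl_adj_in_finite_connected)
  hence P: "finite (path_set \<alpha> \<eta>) \<and> path_set \<alpha> \<eta> \<subseteq> tail \<alpha> \<and> anchor \<alpha> \<in> path_set \<alpha> \<eta> \<and>
      link \<alpha> \<eta> \<in> path_set \<alpha> \<eta> \<and> connected_set E (path_set \<alpha> \<eta>)"
    unfolding path_set_def by (rule someI_ex)
  have "path_set \<alpha> \<eta> \<subseteq> tail_comp \<alpha> (anchor \<alpha>)"
  proof
    fix v assume v: "v \<in> path_set \<alpha> \<eta>"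
    hence "(anchor \<alpha>, v) \<in> (adj_in E (path_set \<alpha> \<eta>))\<^sup>*"
      using P connected_set_iff_root by metis
    hence "(anchor \<alpha>, v) \<in> (adj_in E (tail \<alpha>))\<^sup>*" using P rtrancl_adj_in_mono by metis
    thus "v \<in> tail_comp \<alpha> (anchor \<alpha>)" using v P unfolding mem_tail_comp_iff by blast
  qed
  thus ?thesis using P main by simp
qed

definition branch_set :: "'a \<Rightarrow> 'v set" where
  "branch_set \<alpha> = insert (anchor \<alpha>) (\<Union>\<eta>\<in>{\<eta>. \<eta> \<prec> \<alpha>}. path_set \<alpha> \<eta>)"

lemma branch_set_subset: "\<alpha> \<in> Field k \<Longrightarrow> branch_set \<alpha> \<subseteq> main_comp \<alpha>"
  unfolding branch_set_def using anchor path_set by blast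

lemma connected_branch_set: "connected_set E (branch_set \<alpha>)"
  unfolding branch_set_def using path_set by (intro connected_set_insert_UN) blast

lemma branch_set_bounded:
  assumes \<alpha>: "\<alpha> \<in> Field k"
  shows "\<exists>g. g \<in> Field k \<and> branch_set \<alpha> \<subseteq> e ` {\<beta>. \<beta> \<prec> g}"
proof -
  have small: "small (branch_set \<alpha>)"
    unfolding branch_set_def using path_set small_finite
    by (intro small_insert small_UN[OF small_initial_segment[OF \<alpha>]]) blast
  have BV: "branch_set \<alpha> \<subseteq> V"
    using branch_set_subset[OF \<alpha>] main_comp_subset_tail[OF \<alpha>] tail_subset by blast
  obtain g where g: "g \<in> Field k" "\<And>b. b \<in> index ` branch_set \<alpha> \<Longrightarrow> b \<prec> g"
    using small_bounded[OF _ small_image[OF small]] index_Field BV by blast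
  have "branch_set \<alpha> \<subseteq> e ` {\<beta>. \<beta> \<prec> g}"
  proof
    fix v assume "v \<in> branch_set \<alpha>"
    thus "v \<in> e ` {\<beta>. \<beta> \<prec> g}" using g(2) e_index BV by (metis imageI mem_Collect_eq subsetD)
  qed
  thus ?thesis using g(1) by blast
qed

definition bound :: "'a \<Rightarrow> 'a" where
  "bound \<alpha> = (SOME g. g \<in> Field k \<and> branch_set \<alpha> \<subseteq> e ` {\<beta>. \<beta> \<prec> g})"

lemma bound: "\<alpha> \<in> Field k \<Longrightarrow> bound \<alpha> \<in> Field k \<and> branch_set \<alpha> \<subseteq> e ` {\<beta>. \<beta> \<prec> bound \<alpha>}"
  unfolding bound_def by (rule someI_ex[OF branch_set_bounded])

lemma branch_sets_adjacent:
  assumes \<eta>\<alpha>: "\<eta> \<prec> \<alpha>" and bound_\<eta>: "bound \<eta> \<prec> \<alpha>"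
  shows "branch_set \<eta> \<inter> branch_set \<alpha> = {} \<and> (\<exists>p\<in>branch_set \<eta>. \<exists>q\<in>branch_set \<alpha>. {p, q} \<in> E)"
proof
  have \<eta>: "\<eta> \<in> Field k" and \<alpha>: "\<alpha> \<in> Field k" using prec_Field[OF \<eta>\<alpha>] by blast+
  have "branch_set \<eta> \<subseteq> e ` {\<beta>. \<beta> \<prec> \<alpha>}" using bound[OF \<eta>] prec_trans[OF _ bound_\<eta>] by blast
  moreover have "branch_set \<alpha> \<subseteq> tail \<alpha>"
    using branch_set_subset[OF \<alpha>] main_comp_subset_tail[OF \<alpha>] by blast
  ultimately show "branch_set \<eta> \<inter> branch_set \<alpha> = {}" unfolding tail_def by blast
  have "anchor \<eta> \<in> branch_set \<eta>" "link \<alpha> \<eta> \<in> branch_set \<alpha>"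
    unfolding branch_set_def using path_set[OF \<eta>\<alpha>] \<eta>\<alpha> by blast+
  thus "\<exists>p\<in>branch_set \<eta>. \<exists>q\<in>branch_set \<alpha>. {p, q} \<in> E" using link[OF \<eta>\<alpha>] by blast
qed

text \<open>Branch sets are taken at closure points of \<open>bound\<close>: then for \<open>\<eta> \<prec> \<alpha>\<close> the branch set of
  \<open>\<eta>\<close> consists of vertices enumerated before \<open>\<alpha>\<close>, and is disjoint from that of \<open>\<alpha>\<close>.\<close>

theorem has_complete_minor: "has_complete_minor k V E"
proof -
  define G where "G = {\<gamma> \<in> Field k. \<forall>\<eta>. \<eta> \<prec> \<gamma> \<longrightarrow> bound \<eta> \<prec> \<gamma>}"
  have "\<not> small G" unfolding G_def using closure_points_not_small[of bound] bound by blast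
  then obtain f where f: "inj_on f (Field k)" "f ` Field k \<subseteq> G" by (rule not_small_embedding)
  have G: "\<gamma> \<in> Field k" if "\<gamma> \<in> G" for \<gamma> using that unfolding G_def by blast
  have separated: "branch_set \<eta> \<inter> branch_set \<alpha> = {} \<and>
      (\<exists>p\<in>branch_set \<eta>. \<exists>q\<in>branch_set \<alpha>. {p, q} \<in> E)"
    if "\<alpha> \<in> G" "\<eta> \<prec> \<alpha>" for \<eta> \<alpha>
    using that branch_sets_adjacent unfolding G_def by blast
  have fG: "f u \<in> G" "f u \<in> Field k" if "u \<in> Field k" for u using f(2) G that by blast+
  have ordered: "f u \<prec> f w \<or> f w \<prec> f u" if "u \<in> Field k" "w \<in> Field k" "u \<noteq> w" for u w
    using prec_trichotomy fG inj_onD[OF f(1)] that by metis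
  show ?thesis
    unfolding has_complete_minor_def
  proof (intro exI[of _ "\<lambda>u. branch_set (f u)"] conjI ballI impI)
    fix u assume u: "u \<in> Field k"
    show "branch_set (f u) \<subseteq> V"
      using branch_set_subset[OF fG(2)[OF u]] main_comp_subset_tail[OF fG(2)[OF u]] tail_subset by blast
    show "connected_set E (branch_set (f u))" by (rule connected_branch_set)
  next
    fix u w assume uw: "u \<in> Field k" "w \<in> Field k" "u \<noteq> w"
    thus "branch_set (f u) \<inter> branch_set (f w) = {}"
      using ordered[OF uw] separated fG by blast
    show "\<exists>x\<in>branch_set (f u). \<exists>y\<in>branch_set (f w). {x, y} \<in> E"
      using ordered[OF uw]
    proof
      assume "f u \<prec> f w"
      thus ?thesis using separated fG uw by blast
    next
      assume "f w \<prec> f u"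
      then obtain p q where "p \<in> branch_set (f w)" "q \<in> branch_set (f u)" "{p, q} \<in> E"
        using separated fG uw by blast
      moreover have "{p, q} = {q, p}" by (rule insert_commute)
      ultimately show ?thesis by auto
    qed
  qed
qed

end

context inaccessible_card
begin

lemma weakly_compact_has_complete_minor:
  assumes "weakly_compact k" "kl_connected k k V E"
  shows "has_complete_minor k V E"
proof -
  obtain V' where V': "V' \<subseteq> V" "|V'| =o k" "kl_connected k k V' E"
    using kl_connected_subgraph_ordIso[OF assms(2)] .
  have "|Field k| =o |V'|" using Field_ordIso V'(2) ordIso_symmetric ordIso_transitive by blast
  then obtain e where e: "bij_betw e (Field k) V'" using card_of_ordIso by blast
  interpret enumerated_graph k V' E e by unfold_locales (fact e, fact V'(3))
  obtain H where "H \<subseteq> Field k" "|H| =o k" "homogeneous split_colour H"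
    using assms(1) unfolding weakly_compact_iff_homogeneous by blast
  then interpret homogeneous_enumeration k V' E e H by unfold_locales
  show ?thesis by (rule has_complete_minor_mono[OF V'(1) has_complete_minor])
qed

end

theorem mainTheorem11:
  fixes k :: "'a rel"
  assumes "inaccessible k"
    and "|Field k| \<le>o |UNIV :: 'v set|"
  shows "weakly_compact k \<longleftrightarrow>
    (\<forall>(V :: 'v set) E. graph V E \<and> kl_connected k k V E \<longrightarrow> has_complete_minor k V E)"
proof -
  interpret inaccessible_card k by unfold_locales (rule assms(1))
  show ?thesis
    using weakly_compact_has_complete_minor not_weakly_compact_graph[OF _ assms(2)] by blast
qed

end
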